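(* Let $p$ be a prime, $X$ a countable set, and let $A$ be a norm-closed sub-$\mathbb{Z}_p$-algebra of $\mathcal{B}(\mathbb{Q}_p(X))$ containing the identity. Let $e,f\in A$ be idempotents with $e\ne0$ and $\|e-f\|<1/\|e\|$. Then there is an invertible element $g\in A$ (with $g^{-1}\in A$) such that $g^{-1}eg=f$.
   Context: $\mathbb{Q}_p(X)$ is the set of maps $\xi:X\to\mathbb{Q}_p$ with $|\xi(i)|_p\le1$ for all but finitely many $i$, a $\mathbb{Z}_p$-module under coordinatewise operations, with the topology $\tau$ in which $A\subseteq\mathbb{Q}_p(X)$ is open iff for every finite $P\subseteq X$ the set $A\cap\big(\prod_{i\in P}\mathbb{Q}_p\times\prod_{j\in X\setminus P}\mathbb{Z}_p\big)$ is open in the product topology. $\mathcal{B}(\mathbb{Q}_p(X))$ is the algebra of $\tau$-continuous $\mathbb{Z}_p$-linear maps, with operator norm $\|T\|=\sup_{\|\xi\|\le1}\|T\xi\|$, $\|\xi\|=\max_i|\xi(i)|_p$. *)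

theory Defs
  imports "HOL-Analysis.Analysis"
begin

text \<open>An element of Q_p is represented by its (unique) digit sequence
  a :: int => nat, x = sum_k a(k) p^k, with 0 <= a(k) < p and a(k) = 0 for
  all sufficiently negative k.\<close>

definition padic :: "nat \<Rightarrow> (int \<Rightarrow> nat) set" where
  "padic p = {a. (\<forall>k. a k < p) \<and> (\<exists>N. \<forall>k<N. a k = 0)}"

definition padic_int :: "nat \<Rightarrow> (int \<Rightarrow> nat) set" where
  "padic_int p = {a \<in> padic p. \<forall>k<0. a k = 0}"

definition padic_zero :: "int \<Rightarrow> nat" where
  "padic_zero = (\<lambda>_. 0)"

definition padic_low :: "(int \<Rightarrow> nat) \<Rightarrow> int" where
  "padic_low a = (SOME N. \<forall>k<N. a k = 0)"

text \<open>The representative of x mod p^n Z_p in Z[1/p] \<inter> [0,p^n).\<close>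
definition padic_trunc :: "nat \<Rightarrow> (int \<Rightarrow> nat) \<Rightarrow> int \<Rightarrow> rat" where
  "padic_trunc p a n = (\<Sum>k\<in>{padic_low a..<n}. of_nat (a k) * (of_nat p) powi k)"

definition rat_mod :: "rat \<Rightarrow> rat \<Rightarrow> rat" where
  "rat_mod r m = r - m * of_int \<lfloor>r / m\<rfloor>"

text \<open>Recover the digits from the sequence of truncations t n = x mod p^n.\<close>
definition padic_of_truncs :: "nat \<Rightarrow> (int \<Rightarrow> rat) \<Rightarrow> int \<Rightarrow> nat" where
  "padic_of_truncs p t = (\<lambda>k. nat \<lfloor>(t (k + 1) - t k) / (of_nat p) powi k\<rfloor>)"

definition padic_add :: "nat \<Rightarrow> (int \<Rightarrow> nat) \<Rightarrow> (int \<Rightarrow> nat) \<Rightarrow> int \<Rightarrow> nat" where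
  "padic_add p x y = padic_of_truncs p
     (\<lambda>n. rat_mod (padic_trunc p x n + padic_trunc p y n) ((of_nat p) powi n))"

definition padic_neg :: "nat \<Rightarrow> (int \<Rightarrow> nat) \<Rightarrow> int \<Rightarrow> nat" where
  "padic_neg p x = padic_of_truncs p
     (\<lambda>n. rat_mod (- padic_trunc p x n) ((of_nat p) powi n))"

definition padic_mul :: "nat \<Rightarrow> (int \<Rightarrow> nat) \<Rightarrow> (int \<Rightarrow> nat) \<Rightarrow> int \<Rightarrow> nat" where
  "padic_mul p x y = padic_of_truncs p
     (\<lambda>n. rat_mod (padic_trunc p x (n - padic_low y) * padic_trunc p y (n - padic_low x))
                  ((of_nat p) powi n))"

definition padic_ord :: "(int \<Rightarrow> nat) \<Rightarrow> int" where
  "padic_ord a = (THE k. a k \<noteq> 0 \<and> (\<forall>j<k. a j = 0))"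

definition padic_norm :: "nat \<Rightarrow> (int \<Rightarrow> nat) \<Rightarrow> real" where
  "padic_norm p a = (if a = padic_zero then 0 else (real p) powi (- padic_ord a))"

definition padic_dist :: "nat \<Rightarrow> (int \<Rightarrow> nat) \<Rightarrow> (int \<Rightarrow> nat) \<Rightarrow> real" where
  "padic_dist p x y = padic_norm p (padic_add p x (padic_neg p y))"

definition Qp_top :: "nat \<Rightarrow> (int \<Rightarrow> nat) topology" where
  "Qp_top p = topology (\<lambda>U. U \<subseteq> padic p \<and>
     (\<forall>x\<in>U. \<exists>\<epsilon>>0. \<forall>y\<in>padic p. padic_dist p y x < \<epsilon> \<longrightarrow> y \<in> U))"

type_synonym 'x vec = "'x \<Rightarrow> int \<Rightarrow> nat"
type_synonym 'x oper = "'x vec \<Rightarrow> 'x vec"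

definition QpX :: "nat \<Rightarrow> 'x set \<Rightarrow> 'x vec set" where
  "QpX p X = {\<xi> \<in> PiE X (\<lambda>_. padic p). finite {i \<in> X. padic_norm p (\<xi> i) > 1}}"

definition box :: "nat \<Rightarrow> 'x set \<Rightarrow> 'x set \<Rightarrow> 'x vec set" where
  "box p X P = {\<xi> \<in> PiE X (\<lambda>_. padic p). \<forall>j \<in> X - P. \<xi> j \<in> padic_int p}"

definition tau_open :: "nat \<Rightarrow> 'x set \<Rightarrow> 'x vec set \<Rightarrow> bool" where
  "tau_open p X U \<longleftrightarrow> U \<subseteq> QpX p X \<and>
     (\<forall>P. finite P \<and> P \<subseteq> X \<longrightarrow>
        openin (subtopology (product_topology (\<lambda>i. Qp_top p) X) (box p X P)) (U \<inter> box p X P))"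

definition tau_continuous :: "nat \<Rightarrow> 'x set \<Rightarrow> 'x oper \<Rightarrow> bool" where
  "tau_continuous p X T \<longleftrightarrow>
     (\<forall>U. tau_open p X U \<longrightarrow> tau_open p X {\<xi> \<in> QpX p X. T \<xi> \<in> U})"

definition vadd :: "nat \<Rightarrow> 'x set \<Rightarrow> 'x vec \<Rightarrow> 'x vec \<Rightarrow> 'x vec" where
  "vadd p X \<xi> \<eta> = (\<lambda>i\<in>X. padic_add p (\<xi> i) (\<eta> i))"

definition vneg :: "nat \<Rightarrow> 'x set \<Rightarrow> 'x vec \<Rightarrow> 'x vec" where
  "vneg p X \<xi> = (\<lambda>i\<in>X. padic_neg p (\<xi> i))"

definition vsmul :: "nat \<Rightarrow> 'x set \<Rightarrow> (int \<Rightarrow> nat) \<Rightarrow> 'x vec \<Rightarrow> 'x vec" where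
  "vsmul p X c \<xi> = (\<lambda>i\<in>X. padic_mul p c (\<xi> i))"

definition vzero :: "'x set \<Rightarrow> 'x vec" where
  "vzero X = (\<lambda>i\<in>X. padic_zero)"

definition vnorm :: "nat \<Rightarrow> 'x set \<Rightarrow> 'x vec \<Rightarrow> real" where
  "vnorm p X \<xi> = Sup (insert 0 ((\<lambda>i. padic_norm p (\<xi> i)) ` X))"

definition Bops :: "nat \<Rightarrow> 'x set \<Rightarrow> 'x oper set" where
  "Bops p X = {T. T \<in> extensional (QpX p X) \<and> T ` QpX p X \<subseteq> QpX p X \<and>
     (\<forall>\<xi>\<in>QpX p X. \<forall>\<eta>\<in>QpX p X. T (vadd p X \<xi> \<eta>) = vadd p X (T \<xi>) (T \<eta>)) \<and>
     (\<forall>c\<in>padic_int p. \<forall>\<xi>\<in>QpX p X. T (vsmul p X c \<xi>) = vsmul p X c (T \<xi>)) \<and>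
     tau_continuous p X T}"

definition op_norm :: "nat \<Rightarrow> 'x set \<Rightarrow> 'x oper \<Rightarrow> real" where
  "op_norm p X T = Sup (insert 0 {vnorm p X (T \<xi>) | \<xi>. \<xi> \<in> QpX p X \<and> vnorm p X \<xi> \<le> 1})"

definition op_add :: "nat \<Rightarrow> 'x set \<Rightarrow> 'x oper \<Rightarrow> 'x oper \<Rightarrow> 'x oper" where
  "op_add p X S T = (\<lambda>\<xi>\<in>QpX p X. vadd p X (S \<xi>) (T \<xi>))"

definition op_neg :: "nat \<Rightarrow> 'x set \<Rightarrow> 'x oper \<Rightarrow> 'x oper" where
  "op_neg p X T = (\<lambda>\<xi>\<in>QpX p X. vneg p X (T \<xi>))"

definition op_diff :: "nat \<Rightarrow> 'x set \<Rightarrow> 'x oper \<Rightarrow> 'x oper \<Rightarrow> 'x oper" where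
  "op_diff p X S T = op_add p X S (op_neg p X T)"

definition op_smul :: "nat \<Rightarrow> 'x set \<Rightarrow> (int \<Rightarrow> nat) \<Rightarrow> 'x oper \<Rightarrow> 'x oper" where
  "op_smul p X c T = (\<lambda>\<xi>\<in>QpX p X. vsmul p X c (T \<xi>))"

definition op_comp :: "nat \<Rightarrow> 'x set \<Rightarrow> 'x oper \<Rightarrow> 'x oper \<Rightarrow> 'x oper" where
  "op_comp p X S T = (\<lambda>\<xi>\<in>QpX p X. S (T \<xi>))"

definition op_id :: "nat \<Rightarrow> 'x set \<Rightarrow> 'x oper" where
  "op_id p X = (\<lambda>\<xi>\<in>QpX p X. \<xi>)"

definition op_zero :: "nat \<Rightarrow> 'x set \<Rightarrow> 'x oper" where
  "op_zero p X = (\<lambda>\<xi>\<in>QpX p X. vzero X)"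

definition closed_unital_subalgebra :: "nat \<Rightarrow> 'x set \<Rightarrow> 'x oper set \<Rightarrow> bool" where
  "closed_unital_subalgebra p X A \<longleftrightarrow>
     A \<subseteq> Bops p X \<and> op_id p X \<in> A \<and>
     (\<forall>S\<in>A. \<forall>T\<in>A. op_add p X S T \<in> A \<and> op_comp p X S T \<in> A) \<and>
     (\<forall>c\<in>padic_int p. \<forall>T\<in>A. op_smul p X c T \<in> A) \<and>
     (\<forall>Ts T. (\<forall>n. Ts n \<in> A) \<and> T \<in> Bops p X \<and>
             (\<lambda>n. op_norm p X (op_diff p X (Ts n) T)) \<longlonglongrightarrow> 0 \<longrightarrow> T \<in> A)"

end

theory Submission
  imports Defs
begin

text \<open>
  Put d = e - f, w = e d - d f and u = 1 - w = e f + (1 - e)(1 - f); then e u = e f = u f.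
  Bounded operators have norms in {0} \<union> {p^m}, and a nonzero idempotent has norm p^a with
  a \<ge> 0 because ||e|| = ||e e|| \<le> ||e||^2. Hence ||d|| < p^(-a) forces ||d|| \<le> p^(-a-1), so
  ||f|| \<le> p^a by the ultrametric inequality, and ||w|| \<le> p^(-1). The Neumann series of w
  converges digitwise to an inverse h of u; h is \<tau>-continuous because the partial sums
  approximate it uniformly on balls, so h \<in> A by norm closedness, and h e u = h u f = f.

  Continuity enters through boundedness: the preimage of the unit box under a \<tau>-continuous
  additive map is a \<tau>-neighbourhood of 0 and therefore contains a ball. Elements of Q_p are
  digit sequences whose arithmetic is defined through the truncations x mod p^n, so all
  algebraic laws are checked on truncations.
\<close>

section \<open>Truncations of digit expansions\<close>

definition ppow :: "nat \<Rightarrow> int \<Rightarrow> rat" where "ppow p n = (of_nat p) powi n"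

definition pcong :: "nat \<Rightarrow> int \<Rightarrow> rat \<Rightarrow> rat \<Rightarrow> bool" where
  "pcong p n a b \<longleftrightarrow> (\<exists>z::int. a - b = of_int z * ppow p n)"

text \<open>\<open>val_ge x L\<close>: the digits of \<open>x\<close> below position \<open>L\<close> vanish, i.e. \<open>x \<in> p^L \<int>\<^sub>p\<close>;
  on canonical expansions \<open>agree n x y\<close> means \<open>x \<equiv> y mod p^n \<int>\<^sub>p\<close>
  (\<open>val_ge_diff_iff_agree\<close>).\<close>

definition val_ge :: "(int \<Rightarrow> nat) \<Rightarrow> int \<Rightarrow> bool" where
  "val_ge x L \<longleftrightarrow> (\<forall>k<L. x k = 0)"

definition agree :: "int \<Rightarrow> (int \<Rightarrow> nat) \<Rightarrow> (int \<Rightarrow> nat) \<Rightarrow> bool" where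
  "agree n x y \<longleftrightarrow> (\<forall>k<n. x k = y k)"

lemma ppow_pos: "p > 0 \<Longrightarrow> ppow p n > 0"
  unfolding ppow_def by simp

lemma ppow_add: "p > 0 \<Longrightarrow> ppow p (a + b) = ppow p a * ppow p b"
  unfolding ppow_def by (simp add: power_int_add)

lemma ppow_Suc: "p > 0 \<Longrightarrow> ppow p (n + 1) = ppow p n * of_nat p"
  unfolding ppow_def by (simp add: power_int_add)

lemma ppow_nat: "p > 0 \<Longrightarrow> m \<le> n \<Longrightarrow> ppow p n = ppow p m * of_nat (p ^ nat (n - m))"
proof -
  assume "p > 0" "m \<le> n"
  then have "ppow p n = ppow p (m + (n - m))" by simp
  also have "\<dots> = ppow p m * ppow p (n - m)" using \<open>p>0\<close> by (rule ppow_add)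
  also have "ppow p (n - m) = of_nat (p ^ nat (n - m))" unfolding ppow_def
    using \<open>m \<le> n\<close> by (simp add: power_int_def)
  finally show ?thesis .
qed

lemma pcong_refl[simp]: "pcong p n a a"
  unfolding pcong_def by (rule exI[of _ 0]) simp

lemma pcong_sym: "pcong p n a b \<Longrightarrow> pcong p n b a"
  unfolding pcong_def by (metis minus_diff_eq mult_minus_left of_int_minus)

lemma pcong_trans: "pcong p n a b \<Longrightarrow> pcong p n b c \<Longrightarrow> pcong p n a c"
  unfolding pcong_def
proof (elim exE)
  fix z w assume "a - b = of_int z * ppow p n" "b - c = of_int w * ppow p n"
  then have "a - c = of_int (z + w) * ppow p n" by (simp add: algebra_simps)
  then show "\<exists>z. a - c = of_int z * ppow p n" by blast
qed

lemma pcong_add: "pcong p n a b \<Longrightarrow> pcong p n c d \<Longrightarrow> pcong p n (a + c) (b + d)"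
  unfolding pcong_def
proof (elim exE)
  fix z w assume "a - b = of_int z * ppow p n" "c - d = of_int w * ppow p n"
  then have "(a + c) - (b + d) = of_int (z + w) * ppow p n" by (simp add: algebra_simps)
  then show "\<exists>z. (a + c) - (b + d) = of_int z * ppow p n" by blast
qed

lemma pcong_neg: "pcong p n a b \<Longrightarrow> pcong p n (- a) (- b)"
  unfolding pcong_def
proof (elim exE)
  fix z assume "a - b = of_int z * ppow p n"
  then have "(- a) - (- b) = of_int (- z) * ppow p n" by (simp add: algebra_simps)
  then show "\<exists>z. (- a) - (- b) = of_int z * ppow p n" by blast
qed

lemma pcong_diff: "pcong p n a b \<Longrightarrow> pcong p n c d \<Longrightarrow> pcong p n (a - c) (b - d)"
  using pcong_add[OF _ pcong_neg, of p n a b c d] by simp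

lemma pcong_0_iff: "pcong p n a b \<longleftrightarrow> pcong p n (a - b) 0"
  unfolding pcong_def by simp

lemma pcong_mono: "p > 0 \<Longrightarrow> m \<le> n \<Longrightarrow> pcong p n a b \<Longrightarrow> pcong p m a b"
  unfolding pcong_def
proof (elim exE)
  fix z assume "p > 0" "m \<le> n" "a - b = of_int z * ppow p n"
  then have "a - b = of_int (z * int (p ^ nat (n - m))) * ppow p m"
    by (simp add: ppow_nat[of p m n])
  then show "\<exists>z. a - b = of_int z * ppow p m" by blast
qed

lemma pcong_mult0: "p > 0 \<Longrightarrow> pcong p a r 0 \<Longrightarrow> pcong p b s 0 \<Longrightarrow> pcong p (a + b) (r * s) 0"
  unfolding pcong_def
proof (elim exE)
  fix z w assume "p > 0" "r - 0 = of_int z * ppow p a" "s - 0 = of_int w * ppow p b"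
  then have "r * s - 0 = of_int (z * w) * ppow p (a + b)" by (simp add: ppow_add)
  then show "\<exists>z. r * s - 0 = of_int z * ppow p (a + b)" by blast
qed

lemma pcong_mult: "p > 0 \<Longrightarrow> pcong p a r r' \<Longrightarrow> pcong p b s 0 \<Longrightarrow> pcong p (a + b) (r * s) (r' * s)"
  unfolding pcong_def
proof (elim exE)
  fix z w assume "p > 0" "r - r' = of_int z * ppow p a" "s - 0 = of_int w * ppow p b"
  then have "r * s - r' * s = of_int (z * w) * ppow p (a + b)"
    by (simp add: ppow_add left_diff_distrib[symmetric])
  then show "\<exists>z. r * s - r' * s = of_int z * ppow p (a + b)" by blast
qed

lemma pcong_mult': "p > 0 \<Longrightarrow> pcong p a s 0 \<Longrightarrow> pcong p b r r' \<Longrightarrow> pcong p (a + b) (s * r) (s * r')"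
  unfolding pcong_def
proof (elim exE)
  fix z w assume "p > 0" "s - 0 = of_int z * ppow p a" "r - r' = of_int w * ppow p b"
  then have "s * r - s * r' = of_int (z * w) * ppow p (a + b)"
    by (simp add: ppow_add right_diff_distrib[symmetric])
  then show "\<exists>z. s * r - s * r' = of_int z * ppow p (a + b)" by blast
qed

lemma pcong_intmult: "pcong p n a 0 \<Longrightarrow> pcong p n (of_int z * a) 0"
  unfolding pcong_def by (metis diff_zero mult.assoc of_int_mult)

lemma pcong_ppow: "p > 0 \<Longrightarrow> m \<le> n \<Longrightarrow> pcong p m (ppow p n) 0"
  unfolding pcong_def by (rule exI[of _ "int (p ^ nat (n - m))"]) (simp add: ppow_nat[of p m n])


lemma rat_mod_bounds: "(m::rat) > 0 \<Longrightarrow> 0 \<le> rat_mod r m \<and> rat_mod r m < m"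
proof -
  assume m: "m > 0"
  have a: "of_int \<lfloor>r / m\<rfloor> \<le> r / m" and b: "r / m < of_int \<lfloor>r / m\<rfloor> + 1" by linarith+
  from a m have "m * of_int \<lfloor>r / m\<rfloor> \<le> r" by (simp add: le_divide_eq mult.commute)
  moreover from b m have "r < m * of_int \<lfloor>r / m\<rfloor> + m" by (simp add: divide_less_eq algebra_simps)
  ultimately show ?thesis unfolding rat_mod_def by simp
qed

lemma rat_mod_pcong: "p > 0 \<Longrightarrow> pcong p n (rat_mod r (ppow p n)) r"
  unfolding pcong_def rat_mod_def
  by (rule exI[of _ "- \<lfloor>r / ppow p n\<rfloor>"]) (simp add: algebra_simps)

lemma rat_mod_eq: "p > 0 \<Longrightarrow> pcong p n a b \<Longrightarrow> rat_mod a (ppow p n) = rat_mod b (ppow p n)"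
  unfolding pcong_def
proof (elim exE)
  fix z assume p: "p > 0" and z: "a - b = of_int z * ppow p n"
  have pos: "ppow p n > 0" using p by (rule ppow_pos)
  have "a = b + of_int z * ppow p n" using z by simp
  then have "a / ppow p n = b / ppow p n + of_int z" using pos by (simp add: field_simps)
  then have "\<lfloor>a / ppow p n\<rfloor> = \<lfloor>b / ppow p n\<rfloor> + z" by simp
  then show ?thesis unfolding rat_mod_def using z by (simp add: algebra_simps)
qed

lemma rat_mod_id: "0 \<le> a \<Longrightarrow> a < (m::rat) \<Longrightarrow> rat_mod a m = a"
proof -
  assume "0 \<le> a" "a < m"
  then have "0 \<le> a / m" "a / m < 1" by (auto simp: field_simps)
  then have "\<lfloor>a / m\<rfloor> = 0" by linarith
  then show ?thesis unfolding rat_mod_def by simp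
qed

lemma pcong_bounded_eq:
  "p > 0 \<Longrightarrow> 0 \<le> a \<Longrightarrow> a < ppow p n \<Longrightarrow> 0 \<le> b \<Longrightarrow> b < ppow p n \<Longrightarrow> pcong p n a b \<Longrightarrow> a = b"
  by (metis rat_mod_eq rat_mod_id)

lemma rat_mod_eq_iff: "p > 0 \<Longrightarrow> rat_mod a (ppow p n) = rat_mod b (ppow p n) \<longleftrightarrow> pcong p n a b"
  by (metis pcong_sym pcong_trans rat_mod_eq rat_mod_pcong)

lemma val_ge_mono: "val_ge x L \<Longrightarrow> L' \<le> L \<Longrightarrow> val_ge x L'"
  unfolding val_ge_def by auto

lemma val_ge_padic_low: "x \<in> padic p \<Longrightarrow> val_ge x (padic_low x)"
proof -
  assume "x \<in> padic p"
  then have "\<exists>N. \<forall>k<N. x k = 0" unfolding padic_def by blast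
  then have "\<forall>k<(SOME N. \<forall>k<N. x k = 0). x k = 0" by (rule someI_ex)
  then show ?thesis unfolding val_ge_def padic_low_def .
qed

lemma val_ge_max: "val_ge x a \<Longrightarrow> val_ge x b \<Longrightarrow> val_ge x (max a b)"
  by (simp add: max_def)

lemma padic_val_ge_ex: "x \<in> padic p \<Longrightarrow> \<exists>L. val_ge x L"
  using val_ge_padic_low by blast

lemma padic_digit_less: "x \<in> padic p \<Longrightarrow> x k < p"
  unfolding padic_def by auto

lemma sum_val_ge:
  assumes "val_ge x L" "L' \<le> L"
  shows "(\<Sum>k\<in>{L'..<n}. of_nat (x k) * c k) = (\<Sum>k\<in>{L..<n}. of_nat (x k) * (c k :: rat))"
proof (cases "n \<le> L")
  case True
  then have "(\<Sum>k\<in>{L'..<n}. of_nat (x k) * c k) = 0"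
    using assms by (intro sum.neutral) (auto simp: val_ge_def)
  then show ?thesis using True by simp
next
  case False
  show ?thesis
    by (rule sum.mono_neutral_right) (use assms False in \<open>auto simp: val_ge_def\<close>)
qed

lemma trunc_eq:
  assumes "x \<in> padic p" "val_ge x L"
  shows "padic_trunc p x n = (\<Sum>k\<in>{L..<n}. of_nat (x k) * ppow p k)"
proof -
  define lo where "lo = padic_low x"
  have v: "val_ge x lo" unfolding lo_def using assms(1) by (rule val_ge_padic_low)
  have "padic_trunc p x n = (\<Sum>k\<in>{lo..<n}. of_nat (x k) * ppow p k)"
    unfolding padic_trunc_def lo_def ppow_def ..
  also have "\<dots> = (\<Sum>k\<in>{min L lo..<n}. of_nat (x k) * ppow p k)"
    using sum_val_ge[OF v, of "min L lo"] by simp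
  also have "\<dots> = (\<Sum>k\<in>{L..<n}. of_nat (x k) * ppow p k)"
    using sum_val_ge[OF assms(2), of "min L lo"] by simp
  finally show ?thesis .
qed

lemma trunc_zero: "x \<in> padic p \<Longrightarrow> val_ge x L \<Longrightarrow> n \<le> L \<Longrightarrow> padic_trunc p x n = 0"
  by (subst trunc_eq[of x p L]) auto

lemma trunc_succ:
  assumes "x \<in> padic p"
  shows "padic_trunc p x (n + 1) = padic_trunc p x n + of_nat (x n) * ppow p n"
proof -
  obtain L where L: "val_ge x L" using padic_val_ge_ex[OF assms] by blast
  define L' where "L' = min L n"
  have L': "val_ge x L'" using L unfolding L'_def by (rule val_ge_mono) simp
  have "{L'..<n+1} = insert n {L'..<n}" unfolding L'_def by auto
  then show ?thesis using trunc_eq[OF assms L', of n] trunc_eq[OF assms L', of "n+1"]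
    by (simp add: add.commute)
qed

lemma nat_offset_induct:
  assumes "\<And>n. n \<le> L \<Longrightarrow> P n" "\<And>n. L \<le> n \<Longrightarrow> P n \<Longrightarrow> P (n + 1)"
  shows "P (n::int)"
proof (cases "n \<le> L")
  case True then show ?thesis using assms(1) by blast
next
  case False
  have "\<forall>k::nat. P (L + int k)"
  proof
    fix k show "P (L + int k)"
    proof (induction k)
      case 0 then show ?case using assms(1) by simp
    next
      case (Suc k)
      then have "P (L + int k + 1)" using assms(2)[of "L + int k"] by simp
      then show ?case by (simp add: algebra_simps)
    qed
  qed
  then have "P (L + int (nat (n - L)))" by blast
  then show ?thesis using False by simp
qed

lemma trunc_bounds:
  assumes "p > 0" "x \<in> padic p"
  shows "0 \<le> padic_trunc p x n \<and> padic_trunc p x n < ppow p n"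
proof -
  obtain L where L: "val_ge x L" using padic_val_ge_ex[OF assms(2)] by blast
  show ?thesis
  proof (induction n rule: nat_offset_induct[where L = L])
    case (1 n) then show ?case using trunc_zero[OF assms(2) L] ppow_pos[OF assms(1)] by simp
  next
    case (2 n)
    have "x n + 1 \<le> p" using padic_digit_less[OF assms(2), of n] by simp
    then have "of_nat (x n) + 1 \<le> (of_nat p :: rat)" by (metis of_nat_1 of_nat_add of_nat_le_iff)
    then have d: "of_nat (x n) \<le> (of_nat p - 1 :: rat)" by linarith
    have P: "ppow p (n + 1) = ppow p n * of_nat p" using assms(1) by (rule ppow_Suc)
    have pos: "ppow p n > 0" using assms(1) by (rule ppow_pos)
    have "of_nat (x n) * ppow p n \<le> (of_nat p - 1) * ppow p n"
      using d pos by (intro mult_right_mono) auto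
    then show ?case using 2 trunc_succ[OF assms(2), of n] P pos
      by (auto simp: algebra_simps)
  qed
qed

lemma trunc_cong:
  assumes "p > 0" "x \<in> padic p" "m \<le> n"
  shows "pcong p m (padic_trunc p x n) (padic_trunc p x m)"
proof -
  have "m \<le> n \<longrightarrow> pcong p m (padic_trunc p x n) (padic_trunc p x m)"
  proof (induction n rule: nat_offset_induct[where L = m])
    case (1 n) then show ?case by (cases "n = m") auto
  next
    case (2 n)
    have "pcong p m (of_int (int (x n)) * ppow p n) 0"
      by (rule pcong_intmult) (rule pcong_ppow[OF assms(1) 2(1)])
    then have "pcong p m (padic_trunc p x n + of_nat (x n) * ppow p n) (padic_trunc p x m + 0)"
      using 2 by (intro pcong_add) auto
    then show ?case using trunc_succ[OF assms(2), of n] by simp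
  qed
  then show ?thesis using assms(3) by blast
qed

lemma trunc_cong2:
  assumes "p > 0" "x \<in> padic p" "m \<le> a" "m \<le> b"
  shows "pcong p m (padic_trunc p x a) (padic_trunc p x b)"
  using trunc_cong[OF assms(1,2,3)] trunc_cong[OF assms(1,2,4)] pcong_sym pcong_trans by blast

lemma trunc_in:
  assumes "p > 0" "x \<in> padic p" "val_ge x L"
  shows "pcong p L (padic_trunc p x n) 0"
proof (cases "n \<le> L")
  case True then show ?thesis using trunc_zero[OF assms(2,3)] by simp
next
  case False then show ?thesis
    using trunc_cong[OF assms(1,2), of L n] trunc_zero[OF assms(2,3), of L] by simp
qed

lemma trunc_rat_mod:
  assumes "p > 0" "x \<in> padic p" "m \<le> n"
  shows "padic_trunc p x m = rat_mod (padic_trunc p x n) (ppow p m)"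
  using rat_mod_eq[OF assms(1) trunc_cong[OF assms]] rat_mod_id trunc_bounds[OF assms(1,2)]
  by metis

lemma trunc_digit:
  assumes "p > 0" "x \<in> padic p"
  shows "of_nat (x n) = (padic_trunc p x (n + 1) - padic_trunc p x n) / ppow p n"
  using trunc_succ[OF assms(2), of n] ppow_pos[OF assms(1), of n] by simp

lemma trunc_inj:
  assumes "p > 0" "x \<in> padic p" "y \<in> padic p" "\<And>n. padic_trunc p x n = padic_trunc p y n"
  shows "x = y"
proof
  fix n
  have "(of_nat (x n) :: rat) = of_nat (y n)"
    using trunc_digit[OF assms(1,2)] trunc_digit[OF assms(1,3)] assms(4) by simp
  then show "x n = y n" by simp
qed

lemma agree_iff_trunc:
  assumes "p > 0" "x \<in> padic p" "y \<in> padic p"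
  shows "agree n x y \<longleftrightarrow> padic_trunc p x n = padic_trunc p y n"
proof
  assume a: "agree n x y"
  obtain L1 where L1: "val_ge x L1" using padic_val_ge_ex[OF assms(2)] by blast
  obtain L2 where L2: "val_ge y L2" using padic_val_ge_ex[OF assms(3)] by blast
  define L where "L = min L1 L2"
  have "val_ge x L" "val_ge y L" using L1 L2 unfolding L_def by (auto intro: val_ge_mono)
  then show "padic_trunc p x n = padic_trunc p y n"
    using a unfolding trunc_eq[OF assms(2) \<open>val_ge x L\<close>] trunc_eq[OF assms(3) \<open>val_ge y L\<close>]
      agree_def
    by (intro sum.cong) auto
next
  assume e: "padic_trunc p x n = padic_trunc p y n"
  have tk: "padic_trunc p x k = padic_trunc p y k" if "k \<le> n" for k
    using trunc_rat_mod[OF assms(1,2) that] trunc_rat_mod[OF assms(1,3) that] e by simp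
  show "agree n x y" unfolding agree_def
  proof (intro allI impI)
    fix k assume "k < n"
    then have "(of_nat (x k) :: rat) = of_nat (y k)"
      using trunc_digit[OF assms(1,2)] trunc_digit[OF assms(1,3)] tk[of k] tk[of "k+1"] by simp
    then show "x k = y k" by simp
  qed
qed

lemma padic_of_truncs_digit:
  assumes p: "p > 0"
    and b: "\<And>n. 0 \<le> t n \<and> t n < ppow p n"
    and c: "pcong p k (t (k + 1)) (t k)"
  shows "of_nat (padic_of_truncs p t k) = (t (k + 1) - t k) / ppow p k \<and> padic_of_truncs p t k < p"
proof -
  obtain z where zk: "t (k + 1) - t k = of_int z * ppow p k" using c unfolding pcong_def by blast
  have pos: "ppow p k > 0" using p by (rule ppow_pos)
  have q: "(t (k + 1) - t k) / ppow p k = of_int z" using zk pos by simp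
  have x: "padic_of_truncs p t k = nat z" unfolding padic_of_truncs_def using q
    by (simp add: ppow_def)
  have "of_int z * ppow p k > - ppow p k" using zk b[of k] b[of "k+1"] by linarith
  then have "of_int z > (-1::rat)" using pos
    by (metis mult_minus_left mult_less_cancel_right_pos mult_1)
  then have z0: "z \<ge> 0" by simp
  have "of_int z * ppow p k < ppow p (k + 1)" using zk b[of k] b[of "k+1"] by linarith
  then have "of_int z * ppow p k < of_nat p * ppow p k" using ppow_Suc[OF p, of k]
    by (simp add: mult.commute)
  then have "of_int z < (of_nat p :: rat)" using pos by simp
  then have "z < int p" by linarith
  then show ?thesis using x z0 q by auto
qed

lemma padic_of_truncs_trunc:
  assumes p: "p > 0"
    and b: "\<And>n. 0 \<le> t n \<and> t n < ppow p n"
    and c: "\<And>n. pcong p n (t (n + 1)) (t n)"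
    and z: "\<And>n. n \<le> L \<Longrightarrow> t n = 0"
  shows "padic_of_truncs p t \<in> padic p \<and> val_ge (padic_of_truncs p t) L \<and>
         (\<forall>n. padic_trunc p (padic_of_truncs p t) n = t n)"
proof -
  define x where "x = padic_of_truncs p t"
  note dig = padic_of_truncs_digit[OF p b c, folded x_def]
  have lb: "val_ge x L" unfolding val_ge_def
  proof (intro allI impI)
    fix k assume "k < L"
    then have "t (k + 1) = 0" "t k = 0" using z by auto
    then have "(of_nat (x k) :: rat) = 0" using dig[of k] by simp
    then show "x k = 0" by simp
  qed
  have xp: "x \<in> padic p" using lb dig unfolding padic_def val_ge_def by blast
  have "padic_trunc p x n = t n" for n
  proof (induction n rule: nat_offset_induct[where L = L])
    case (1 n) then show ?case using trunc_zero[OF xp lb] z by simp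
  next
    case (2 n)
    then show ?case using trunc_succ[OF xp, of n] dig[of n] ppow_pos[OF p, of n] by simp
  qed
  then show ?thesis using xp lb unfolding x_def by blast
qed

lemma rat_mod_pcong_Suc:
  assumes "p > 0" "\<And>n. pcong p n (A (n + 1)) (A n)"
  shows "pcong p n (rat_mod (A (n + 1)) (ppow p (n + 1))) (rat_mod (A n) (ppow p n))"
proof -
  have "pcong p (n+1) (rat_mod (A (n + 1)) (ppow p (n + 1))) (A (n+1))"
    by (rule rat_mod_pcong[OF assms(1)])
  then have 1: "pcong p n (rat_mod (A (n + 1)) (ppow p (n + 1))) (A (n+1))"
    using pcong_mono[OF assms(1), of n "n+1"] by simp
  have 2: "pcong p n (A n) (rat_mod (A n) (ppow p n))"
    by (rule pcong_sym, rule rat_mod_pcong[OF assms(1)])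
  show ?thesis using pcong_trans[OF pcong_trans[OF 1 assms(2)] 2] .
qed

lemma rat_mod_bounds_ppow: "p > 0 \<Longrightarrow> 0 \<le> rat_mod r (ppow p n) \<and> rat_mod r (ppow p n) < ppow p n"
  by (rule rat_mod_bounds) (rule ppow_pos)

lemma rat_mod_zero[simp]: "rat_mod 0 m = 0"
  unfolding rat_mod_def by simp

lemma padic_add_trunc:
  assumes p0: "p > 0" and x: "x \<in> padic p" and y: "y \<in> padic p"
  shows "padic_add p x y \<in> padic p \<and>
    (\<forall>n. padic_trunc p (padic_add p x y) n = rat_mod (padic_trunc p x n + padic_trunc p y n)
      (ppow p n))"
proof -
  define t where "t n = rat_mod (padic_trunc p x n + padic_trunc p y n) (ppow p n)" for n
  obtain L1 where L1: "val_ge x L1" using padic_val_ge_ex[OF x] by blast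
  obtain L2 where L2: "val_ge y L2" using padic_val_ge_ex[OF y] by blast
  have "padic_of_truncs p t \<in> padic p \<and> val_ge (padic_of_truncs p t) (min L1 L2) \<and>
    (\<forall>n. padic_trunc p (padic_of_truncs p t) n = t n)"
  proof (rule padic_of_truncs_trunc[OF p0])
    show "0 \<le> t n \<and> t n < ppow p n" for n unfolding t_def by (rule rat_mod_bounds_ppow[OF p0])
    show "pcong p n (t (n + 1)) (t n)" for n
      unfolding t_def by (rule rat_mod_pcong_Suc[OF p0]) (intro pcong_add trunc_cong p0 x y; simp)
    show "t n = 0" if "n \<le> min L1 L2" for n
      using trunc_zero[OF x L1, of n] trunc_zero[OF y L2, of n] that unfolding t_def by simp
  qed
  moreover have "padic_add p x y = padic_of_truncs p t" unfolding padic_add_def t_def ppow_def ..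
  ultimately show ?thesis by (simp add: t_def)
qed

lemma padic_neg_trunc:
  assumes p0: "p > 0" and x: "x \<in> padic p"
  shows "padic_neg p x \<in> padic p \<and>
    (\<forall>n. padic_trunc p (padic_neg p x) n = rat_mod (- padic_trunc p x n) (ppow p n))"
proof -
  define t where "t n = rat_mod (- padic_trunc p x n) (ppow p n)" for n
  obtain L where L: "val_ge x L" using padic_val_ge_ex[OF x] by blast
  have "padic_of_truncs p t \<in> padic p \<and> val_ge (padic_of_truncs p t) L \<and>
    (\<forall>n. padic_trunc p (padic_of_truncs p t) n = t n)"
  proof (rule padic_of_truncs_trunc[OF p0])
    show "0 \<le> t n \<and> t n < ppow p n" for n unfolding t_def by (rule rat_mod_bounds_ppow[OF p0])
    show "pcong p n (t (n + 1)) (t n)" for n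
      unfolding t_def by (rule rat_mod_pcong_Suc[OF p0]) (intro pcong_neg trunc_cong p0 x; simp)
    show "t n = 0" if "n \<le> L" for n using trunc_zero[OF x L, of n] that unfolding t_def by simp
  qed
  moreover have "padic_neg p x = padic_of_truncs p t" unfolding padic_neg_def t_def ppow_def ..
  ultimately show ?thesis by (simp add: t_def)
qed

lemma padic_mul_trunc:
  assumes p0: "p > 0" and x: "x \<in> padic p" and y: "y \<in> padic p"
  shows "padic_mul p x y \<in> padic p \<and> (\<forall>n. padic_trunc p (padic_mul p x y) n =
     rat_mod (padic_trunc p x (n - padic_low y) * padic_trunc p y (n - padic_low x)) (ppow p n))"
proof -
  define lx where "lx = padic_low x"
  define ly where "ly = padic_low y"
  have Lx: "val_ge x lx" unfolding lx_def using x by (rule val_ge_padic_low)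
  have Ly: "val_ge y ly" unfolding ly_def using y by (rule val_ge_padic_low)
  define A where "A n = padic_trunc p x (n - ly) * padic_trunc p y (n - lx)" for n
  define t where "t n = rat_mod (A n) (ppow p n)" for n
  have coh: "pcong p n (A (n + 1)) (A n)" for n
  proof -
    have "pcong p ((n - ly) + ly) (padic_trunc p x (n + 1 - ly) * padic_trunc p y (n + 1 - lx))
      (padic_trunc p x (n - ly) * padic_trunc p y (n + 1 - lx))"
      by (rule pcong_mult[OF p0 trunc_cong[OF p0 x] trunc_in[OF p0 y Ly]]) simp
    moreover have "pcong p (lx + (n - lx)) (padic_trunc p x (n - ly) * padic_trunc p y (n + 1 - lx))
      (padic_trunc p x (n - ly) * padic_trunc p y (n - lx))"
      by (rule pcong_mult'[OF p0 trunc_in[OF p0 x Lx] trunc_cong[OF p0 y]]) simp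
    ultimately show ?thesis unfolding A_def by (auto simp: algebra_simps intro: pcong_trans)
  qed
  have "padic_of_truncs p t \<in> padic p \<and> val_ge (padic_of_truncs p t) (lx + ly) \<and>
    (\<forall>n. padic_trunc p (padic_of_truncs p t) n = t n)"
  proof (rule padic_of_truncs_trunc[OF p0])
    show "0 \<le> t n \<and> t n < ppow p n" for n unfolding t_def by (rule rat_mod_bounds_ppow[OF p0])
    show "pcong p n (t (n + 1)) (t n)" for n unfolding t_def by (rule rat_mod_pcong_Suc[OF p0 coh])
    show "t n = 0" if "n \<le> lx + ly" for n
      using trunc_zero[OF x Lx, of "n - ly"] that unfolding t_def A_def by simp
  qed
  moreover have "padic_mul p x y = padic_of_truncs p t"
    unfolding padic_mul_def t_def A_def lx_def ly_def ppow_def ..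
  ultimately show ?thesis by (simp add: t_def A_def lx_def ly_def)
qed

lemma padic_mul_trunc_gen:
  assumes p0: "p > 0" and x: "x \<in> padic p" and y: "y \<in> padic p"
    and Lx: "val_ge x Lx" and Ly: "val_ge y Ly" and a: "a \<ge> n - Ly" and b: "b \<ge> n - Lx"
  shows "padic_trunc p (padic_mul p x y) n = rat_mod (padic_trunc p x a * padic_trunc p y b)
    (ppow p n)"
proof -
  define lx where "lx = padic_low x"
  define ly where "ly = padic_low y"
  have lx: "val_ge x lx" unfolding lx_def using x by (rule val_ge_padic_low)
  have ly: "val_ge y ly" unfolding ly_def using y by (rule val_ge_padic_low)
  define M where "M = max Lx lx"
  define M' where "M' = max Ly ly"
  have M: "val_ge x M" using Lx lx unfolding M_def by (rule val_ge_max)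
  have M': "val_ge y M'" using Ly ly unfolding M'_def by (rule val_ge_max)
  have 1: "pcong p ((n - M') + M') (padic_trunc p x a * padic_trunc p y b)
    (padic_trunc p x (n - ly) * padic_trunc p y b)"
    by (rule pcong_mult[OF p0 trunc_cong2[OF p0 x] trunc_in[OF p0 y M']])
      (use a in \<open>auto simp: M'_def\<close>)
  have 2: "pcong p (M + (n - M)) (padic_trunc p x (n - ly) * padic_trunc p y b)
    (padic_trunc p x (n - ly) * padic_trunc p y (n - lx))"
    by (rule pcong_mult'[OF p0 trunc_in[OF p0 x M] trunc_cong2[OF p0 y]])
      (use b in \<open>auto simp: M_def\<close>)
  have "pcong p n (padic_trunc p x a * padic_trunc p y b)
    (padic_trunc p x (n - ly) * padic_trunc p y (n - lx))"
    using pcong_trans[OF 1[simplified] 2[simplified]] .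
  then show ?thesis using padic_mul_trunc[OF p0 x y] rat_mod_eq[OF p0] unfolding lx_def ly_def
    by metis
qed

lemma rat_mod_add_left: "p > 0 \<Longrightarrow>
  rat_mod (rat_mod a (ppow p n) + b) (ppow p n) = rat_mod (a + b) (ppow p n)"
  by (rule rat_mod_eq) (auto intro: pcong_add rat_mod_pcong)

lemma rat_mod_add_right: "p > 0 \<Longrightarrow>
  rat_mod (a + rat_mod b (ppow p n)) (ppow p n) = rat_mod (a + b) (ppow p n)"
  by (rule rat_mod_eq) (auto intro: pcong_add rat_mod_pcong)

lemma rat_mod_neg: "p > 0 \<Longrightarrow> rat_mod (- rat_mod a (ppow p n)) (ppow p n) = rat_mod (- a) (ppow p n)"
  by (rule rat_mod_eq) (auto intro: pcong_neg rat_mod_pcong)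

lemma rat_mod_trunc: "p > 0 \<Longrightarrow> x \<in> padic p \<Longrightarrow>
  rat_mod (padic_trunc p x n) (ppow p n) = padic_trunc p x n"
  using trunc_bounds rat_mod_id by blast

lemma padic_zero_closed_pos[simp]: "p > 0 \<Longrightarrow> padic_zero \<in> padic p"
  unfolding padic_zero_def padic_def by auto

lemma val_ge_padic_zero[simp]: "val_ge padic_zero L"
  unfolding val_ge_def padic_zero_def by simp

lemma trunc_padic_zero[simp]: "padic_trunc p padic_zero n = 0"
  unfolding padic_trunc_def padic_zero_def by simp

lemma rat_mod_diff_left: "p > 0 \<Longrightarrow>
  rat_mod (rat_mod a (ppow p n) - b) (ppow p n) = rat_mod (a - b) (ppow p n)"
  by (rule rat_mod_eq) (auto intro: pcong_diff rat_mod_pcong)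

lemma rat_mod_diff_right: "p > 0 \<Longrightarrow>
  rat_mod (a - rat_mod b (ppow p n)) (ppow p n) = rat_mod (a - b) (ppow p n)"
  by (rule rat_mod_eq) (auto intro: pcong_diff rat_mod_pcong)

definition padic_minus_one :: "nat \<Rightarrow> int \<Rightarrow> nat" where
  "padic_minus_one p = (\<lambda>k. if k \<ge> 0 then p - 1 else 0)"

text \<open>Multiplication by \<open>p^j\<close>.\<close>

definition shift :: "int \<Rightarrow> (int \<Rightarrow> nat) \<Rightarrow> int \<Rightarrow> nat" where "shift j x = (\<lambda>k. x (k - j))"

definition padic_ppow :: "int \<Rightarrow> int \<Rightarrow> nat" where "padic_ppow k = (\<lambda>j. if j = k then 1 else 0)"

lemma agree_sym: "agree n x y \<Longrightarrow> agree n y x" unfolding agree_def by simp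

lemma agree_trans: "agree n x y \<Longrightarrow> agree n y z \<Longrightarrow> agree n x z" unfolding agree_def by simp

lemma agree_mono: "m \<le> n \<Longrightarrow> agree n x y \<Longrightarrow> agree m x y" unfolding agree_def by simp

lemma val_ge_iff_agree_zero: "val_ge x n \<longleftrightarrow> agree n x padic_zero"
  unfolding val_ge_def agree_def padic_zero_def by simp

lemma padic_int_iff: "x \<in> padic_int p \<longleftrightarrow> x \<in> padic p \<and> val_ge x 0"
  unfolding padic_int_def val_ge_def by auto

lemma shift_padic[simp]: "x \<in> padic p \<Longrightarrow> shift j x \<in> padic p"
proof -
  assume x: "x \<in> padic p"
  then obtain N where N: "\<forall>k<N. x k = 0" unfolding padic_def by blast
  have "\<forall>k<N + j. shift j x k = 0" unfolding shift_def using N by auto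
  moreover have "\<forall>k. shift j x k < p" unfolding shift_def using x padic_def by auto
  ultimately show ?thesis unfolding padic_def by blast
qed

lemma val_ge_shift: "val_ge (shift j x) (n + j) \<longleftrightarrow> val_ge x n"
  unfolding val_ge_def shift_def
proof (intro iffI allI impI)
  fix k assume a: "\<forall>k<n + j. x (k - j) = 0" and k: "k < n"
  then show "x k = 0" using a[rule_format, of "k + j"] by simp
next
  fix k assume a: "\<forall>k<n. x k = 0" and k: "k < n + j"
  then show "x (k - j) = 0" using a[rule_format, of "k - j"] by simp
qed

lemma shift_shift[simp]: "shift a (shift b x) = shift (a + b) x"
  unfolding shift_def by (simp add: algebra_simps)

lemma shift_0[simp]: "shift 0 x = x"
  unfolding shift_def by simp

section \<open>Arithmetic of Q_p\<close>

locale padic_base =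
  fixes p :: nat
  assumes p_gt_1: "p > 1"
begin

lemma p_pos: "p > 0"
  using p_gt_1 by simp

lemma padic_add_closed[simp]: "x \<in> padic p \<Longrightarrow> y \<in> padic p \<Longrightarrow> padic_add p x y \<in> padic p"
  using padic_add_trunc[OF p_pos] by blast

lemma trunc_padic_add: "x \<in> padic p \<Longrightarrow> y \<in> padic p \<Longrightarrow>
  padic_trunc p (padic_add p x y) n = rat_mod (padic_trunc p x n + padic_trunc p y n) (ppow p n)"
  using padic_add_trunc[OF p_pos] by blast

lemma padic_neg_closed[simp]: "x \<in> padic p \<Longrightarrow> padic_neg p x \<in> padic p"
  using padic_neg_trunc[OF p_pos] by blast

lemma trunc_padic_neg: "x \<in> padic p \<Longrightarrow>
  padic_trunc p (padic_neg p x) n = rat_mod (- padic_trunc p x n) (ppow p n)"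
  using padic_neg_trunc[OF p_pos] by blast

lemma padic_mul_closed[simp]: "x \<in> padic p \<Longrightarrow> y \<in> padic p \<Longrightarrow> padic_mul p x y \<in> padic p"
  using padic_mul_trunc[OF p_pos] by blast

lemmas trunc_simps = trunc_padic_add trunc_padic_neg rat_mod_add_left[OF p_pos]
  rat_mod_add_right[OF p_pos] rat_mod_neg[OF p_pos] rat_mod_trunc[OF p_pos]
  rat_mod_diff_left[OF p_pos] rat_mod_diff_right[OF p_pos]

lemma padic_zero_closed[simp]: "padic_zero \<in> padic p" using p_pos by simp

lemma padic_add_comm: "x \<in> padic p \<Longrightarrow> y \<in> padic p \<Longrightarrow> padic_add p x y = padic_add p y x"
  by (rule trunc_inj[OF p_pos]) (auto simp: trunc_simps add.commute)

lemma padic_add_assoc: "x \<in> padic p \<Longrightarrow> y \<in> padic p \<Longrightarrow> z \<in> padic p \<Longrightarrow>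
   padic_add p (padic_add p x y) z = padic_add p x (padic_add p y z)"
  by (rule trunc_inj[OF p_pos]) (auto simp: trunc_simps add.assoc)

lemma padic_add_zero: "x \<in> padic p \<Longrightarrow> padic_add p x padic_zero = x"
  by (rule trunc_inj[OF p_pos]) (auto simp: trunc_simps)

lemma padic_add_neg: "x \<in> padic p \<Longrightarrow> padic_add p x (padic_neg p x) = padic_zero"
  by (rule trunc_inj[OF p_pos]) (auto simp: trunc_simps)

lemma padic_neg_neg: "x \<in> padic p \<Longrightarrow> padic_neg p (padic_neg p x) = x"
  by (rule trunc_inj[OF p_pos]) (auto simp: trunc_simps)

lemma padic_neg_add: "x \<in> padic p \<Longrightarrow> y \<in> padic p \<Longrightarrow>
   padic_neg p (padic_add p x y) = padic_add p (padic_neg p x) (padic_neg p y)"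
  by (rule trunc_inj[OF p_pos]) (auto simp: trunc_simps add.commute)

lemma agree_add: "x \<in> padic p \<Longrightarrow> y \<in> padic p \<Longrightarrow> x' \<in> padic p \<Longrightarrow> y' \<in> padic p \<Longrightarrow>
  agree n x x' \<Longrightarrow> agree n y y' \<Longrightarrow> agree n (padic_add p x y) (padic_add p x' y')"
  by (simp add: agree_iff_trunc[OF p_pos] trunc_padic_add)

lemma agree_neg: "x \<in> padic p \<Longrightarrow> x' \<in> padic p \<Longrightarrow>
  agree n x x' \<Longrightarrow> agree n (padic_neg p x) (padic_neg p x')"
  by (simp add: agree_iff_trunc[OF p_pos] trunc_padic_neg)

lemma val_ge_diff_iff_agree: "x \<in> padic p \<Longrightarrow> y \<in> padic p \<Longrightarrow>
  val_ge (padic_add p x (padic_neg p y)) n \<longleftrightarrow> agree n x y"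
proof -
  assume x: "x \<in> padic p" and y: "y \<in> padic p"
  have "val_ge (padic_add p x (padic_neg p y)) n \<longleftrightarrow> padic_trunc p (padic_add p x (padic_neg p y)) n =
    0"
    unfolding val_ge_iff_agree_zero
      using agree_iff_trunc[OF p_pos, of "padic_add p x (padic_neg p y)" padic_zero] x y by simp
  also have "\<dots> \<longleftrightarrow> rat_mod (padic_trunc p x n - padic_trunc p y n) (ppow p n) = rat_mod 0 (ppow p n)"
    using x y by (simp add: trunc_simps)
  also have "\<dots> \<longleftrightarrow> pcong p n (padic_trunc p x n - padic_trunc p y n) 0"
    using rat_mod_eq_iff[OF p_pos, of "padic_trunc p x n - padic_trunc p y n" n 0] by simp
  also have "\<dots> \<longleftrightarrow> pcong p n (padic_trunc p x n) (padic_trunc p y n)"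
    by (simp add: pcong_0_iff[symmetric])
  also have "\<dots> \<longleftrightarrow> padic_trunc p x n = padic_trunc p y n"
    using pcong_bounded_eq[OF p_pos] trunc_bounds[OF p_pos x] trunc_bounds[OF p_pos y]
      by (metis pcong_refl)
  finally show ?thesis using agree_iff_trunc[OF p_pos x y] by simp
qed

lemma agree_padic_mul:
  assumes c: "c \<in> padic_int p" and x: "x \<in> padic p" and y: "y \<in> padic p" and a: "agree n x y"
  shows "agree n (padic_mul p c x) (padic_mul p c y)"
proof -
  have cp: "c \<in> padic p" and c0: "val_ge c 0" using c unfolding padic_int_iff by auto
  obtain L1 where L1: "val_ge x L1" using padic_val_ge_ex[OF x] by blast
  obtain L2 where L2: "val_ge y L2" using padic_val_ge_ex[OF y] by blast
  define L where "L = min L1 L2"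
  have Lx: "val_ge x L" "val_ge y L" using L1 L2 unfolding L_def by (auto intro: val_ge_mono)
  have "padic_trunc p (padic_mul p c x) n = rat_mod (padic_trunc p c (n - L) * padic_trunc p x n)
    (ppow p n)"
    by (rule padic_mul_trunc_gen[OF p_pos cp x c0 Lx(1)]) auto
  moreover have "padic_trunc p (padic_mul p c y) n = rat_mod
    (padic_trunc p c (n - L) * padic_trunc p y n) (ppow p n)"
    by (rule padic_mul_trunc_gen[OF p_pos cp y c0 Lx(2)]) auto
  moreover have "padic_trunc p x n = padic_trunc p y n" using a agree_iff_trunc[OF p_pos x y]
    by simp
  ultimately show ?thesis using agree_iff_trunc[OF p_pos] x y cp by simp
qed

lemma padic_minus_one_int: "(padic_minus_one p) \<in> padic_int p"
proof -
  have "\<forall>k<0. (padic_minus_one p) k = 0" unfolding padic_minus_one_def by auto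
  moreover have "\<forall>k. (padic_minus_one p) k < p" unfolding padic_minus_one_def using p_gt_1 by auto
  ultimately show ?thesis unfolding padic_int_def padic_def by blast
qed

lemma val_ge_padic_minus_one: "val_ge (padic_minus_one p) 0"
  unfolding padic_minus_one_def val_ge_def by auto

lemma trunc_padic_minus_one: "n \<ge> 0 \<Longrightarrow> padic_trunc p (padic_minus_one p) n = ppow p n - 1"
proof -
  have np: "(padic_minus_one p) \<in> padic p" using padic_minus_one_int unfolding padic_int_def by auto
  have "n \<ge> 0 \<longrightarrow> padic_trunc p (padic_minus_one p) n = ppow p n - 1"
  proof (induction n rule: nat_offset_induct[where L = 0])
    case (1 n) then show ?case using trunc_zero[OF np val_ge_padic_minus_one, of n]
      by (cases "n = 0") (auto simp: ppow_def)
  next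
    case (2 n)
    then have "padic_trunc p (padic_minus_one p) (n + 1) = ppow p n - 1 + of_nat (p - 1) * ppow p n"
      using trunc_succ[OF np, of n] by (simp add: padic_minus_one_def)
    also have "\<dots> = ppow p n * of_nat p - 1" using p_gt_1 by (simp add: of_nat_diff algebra_simps)
    also have "\<dots> = ppow p (n + 1) - 1" by (simp add: ppow_Suc[OF p_pos])
    finally show ?case by simp
  qed
  then show "n \<ge> 0 \<Longrightarrow> ?thesis" by blast
qed

lemma padic_mul_minus_one: "x \<in> padic p \<Longrightarrow> padic_mul p (padic_minus_one p) x = padic_neg p x"
proof (rule trunc_inj[OF p_pos])
  assume x: "x \<in> padic p"
  then show "padic_mul p (padic_minus_one p) x \<in> padic p" using padic_minus_one_int padic_int_def
    by auto
  show "padic_neg p x \<in> padic p" using x by simp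
  fix n
  have np: "(padic_minus_one p) \<in> padic p" using padic_minus_one_int unfolding padic_int_def by auto
  obtain L where L: "val_ge x L" using padic_val_ge_ex[OF x] by blast
  define a where "a = max (n - L) 0"
  have "padic_trunc p (padic_mul p (padic_minus_one p) x) n = rat_mod
    (padic_trunc p (padic_minus_one p) a * padic_trunc p x n) (ppow p n)"
    by (rule padic_mul_trunc_gen[OF p_pos np x val_ge_padic_minus_one L]) (auto simp: a_def)
  also have "padic_trunc p (padic_minus_one p) a = ppow p a - 1" using trunc_padic_minus_one[of a]
    by (simp add: a_def)
  then have "padic_trunc p (padic_minus_one p) a * padic_trunc p x n = ppow p a * padic_trunc p x n
    - padic_trunc p x n"
    by (simp only: left_diff_distrib mult_1)
  also have "rat_mod (ppow p a * padic_trunc p x n - padic_trunc p x n) (ppow p n) = rat_mod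
    (0 - padic_trunc p x n) (ppow p n)"
  proof (rule rat_mod_eq[OF p_pos], rule pcong_diff[OF _ pcong_refl])
    have "pcong p (a + L) (ppow p a * padic_trunc p x n) 0"
      by (rule pcong_mult0[OF p_pos pcong_ppow[OF p_pos] trunc_in[OF p_pos x L]]) simp
    then show "pcong p n (ppow p a * padic_trunc p x n) 0"
      by (rule pcong_mono[OF p_pos, rotated]) (simp add: a_def)
  qed
  finally show "padic_trunc p (padic_mul p (padic_minus_one p) x) n = padic_trunc p (padic_neg p x)
    n" using trunc_padic_neg[OF x] by simp
qed

lemma trunc_shift: "x \<in> padic p \<Longrightarrow> padic_trunc p (shift j x) n = ppow p j * padic_trunc p x (n - j)"
proof -
  assume x: "x \<in> padic p"
  obtain L where L: "val_ge x L" using padic_val_ge_ex[OF x] by blast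
  have sL: "val_ge (shift j x) (L + j)" using L val_ge_shift by blast
  show ?thesis
  proof (induction n rule: nat_offset_induct[where L = "L + j"])
    case (1 n) then show ?case
      using trunc_zero[OF shift_padic[OF x] sL, of n] trunc_zero[OF x L, of "n - j"] by simp
  next
    case (2 n)
    have e: "n + 1 - j = (n - j) + 1" by simp
    have a: "padic_trunc p (shift j x) (n+1) = padic_trunc p (shift j x) n + of_nat (x (n - j)) *
      ppow p n"
      using trunc_succ[OF shift_padic[OF x, of j], of n] by (simp add: shift_def)
    have b: "padic_trunc p x (n + 1 - j) = padic_trunc p x (n - j) + of_nat (x (n-j)) * ppow p
      (n - j)"
      unfolding e by (rule trunc_succ[OF x])
    have c: "ppow p n = ppow p j * ppow p (n - j)" using ppow_add[OF p_pos, of j "n-j"] by simp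
    show ?case using 2 a b c by (simp add: algebra_simps)
  qed
qed

lemma padic_ppow_int: "k \<ge> 0 \<Longrightarrow> padic_ppow k \<in> padic_int p"
  unfolding padic_ppow_def padic_int_def padic_def using p_gt_1 by auto

lemma val_ge_padic_ppow: "k \<ge> 0 \<Longrightarrow> val_ge (padic_ppow k) 0" unfolding padic_ppow_def val_ge_def
  by auto

lemma trunc_padic_ppow: "a > k \<Longrightarrow> padic_trunc p (padic_ppow k) a = ppow p k"
proof -
  assume a: "a > k"
  have pp: "padic_ppow k \<in> padic p" unfolding padic_ppow_def padic_def using p_gt_1 by auto
  have l: "val_ge (padic_ppow k) k" unfolding padic_ppow_def val_ge_def by auto
  have "padic_trunc p (padic_ppow k) a = (\<Sum>j\<in>{k..<a}. of_nat (padic_ppow k j) * ppow p j)"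
    by (rule trunc_eq[OF pp l])
  also have "\<dots> = (\<Sum>j\<in>{k}. of_nat (padic_ppow k j) * ppow p j)"
    by (rule sum.mono_neutral_right) (use a in \<open>auto simp: padic_ppow_def\<close>)
  finally show ?thesis by (simp add: padic_ppow_def)
qed

lemma padic_mul_ppow: "k \<ge> 0 \<Longrightarrow> x \<in> padic p \<Longrightarrow> padic_mul p (padic_ppow k) x = shift k x"
proof (rule trunc_inj[OF p_pos])
  assume k: "k \<ge> 0" and x: "x \<in> padic p"
  have pp: "padic_ppow k \<in> padic p" using padic_ppow_int[OF k] unfolding padic_int_def by auto
  then show "padic_mul p (padic_ppow k) x \<in> padic p" using x by simp
  show "shift k x \<in> padic p" using x by simp
  fix n
  obtain L where L: "val_ge x L" using padic_val_ge_ex[OF x] by blast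
  define a where "a = max (n - L) (k + 1)"
  have "padic_trunc p (padic_mul p (padic_ppow k) x) n = rat_mod
    (padic_trunc p (padic_ppow k) a * padic_trunc p x n) (ppow p n)"
    by (rule padic_mul_trunc_gen[OF p_pos pp x val_ge_padic_ppow[OF k] L]) (auto simp: a_def)
  also have "\<dots> = rat_mod (ppow p k * padic_trunc p x n) (ppow p n)" using trunc_padic_ppow[of k a]
    by (simp add: a_def)
  also have "\<dots> = rat_mod (ppow p k * padic_trunc p x (n - k)) (ppow p n)"
  proof (rule rat_mod_eq[OF p_pos])
    have "pcong p (k + (n - k)) (ppow p k * padic_trunc p x n) (ppow p k * padic_trunc p x (n - k))"
      by (rule pcong_mult'[OF p_pos pcong_ppow[OF p_pos] trunc_cong[OF p_pos x]]) (use k in auto)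
    then show "pcong p n (ppow p k * padic_trunc p x n) (ppow p k * padic_trunc p x (n - k))"
      by simp
  qed
  also have "\<dots> = padic_trunc p (shift k x) n"
    using trunc_shift[OF x] rat_mod_trunc[OF p_pos shift_padic[OF x]] by metis
  finally show "padic_trunc p (padic_mul p (padic_ppow k) x) n = padic_trunc p (shift k x) n" .
qed

lemma padic_ord_props:
  assumes x: "x \<in> padic p" and nz: "x \<noteq> padic_zero"
  shows "x (padic_ord x) \<noteq> 0 \<and> val_ge x (padic_ord x)"
proof -
  obtain L where L: "val_ge x L" using padic_val_ge_ex[OF x] by blast
  obtain k where k: "x k \<noteq> 0" using nz unfolding padic_zero_def by auto
  have kL: "k \<ge> L" using k L unfolding val_ge_def by (cases "k < L") auto
  define m where "m = (LEAST i::nat. x (L + int i) \<noteq> 0)"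
  have ex: "x (L + int (nat (k - L))) \<noteq> 0" using k kL by simp
  have m1: "x (L + int m) \<noteq> 0" unfolding m_def
    by (rule LeastI[where P = "\<lambda>i. x (L + int i) \<noteq> 0", OF ex])
  have m2: "\<forall>j<L + int m. x j = 0"
  proof (intro allI impI)
    fix j assume j: "j < L + int m"
    show "x j = 0"
    proof (cases "j < L")
      case True then show ?thesis using L unfolding val_ge_def by blast
    next
      case False
      then have "nat (j - L) < m" using j by auto
      then have "x (L + int (nat (j - L))) = 0" unfolding m_def
        using not_less_Least[where P = "\<lambda>i. x (L + int i) \<noteq> 0"] by blast
      then show ?thesis using False by simp
    qed
  qed
  have uniq: "\<exists>!q. x q \<noteq> 0 \<and> (\<forall>j<q. x j = 0)"
  proof (rule ex1I[of _ "L + int m"])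
    show "x (L + int m) \<noteq> 0 \<and> (\<forall>j<L + int m. x j = 0)" using m1 m2 by blast
    fix q assume q: "x q \<noteq> 0 \<and> (\<forall>j<q. x j = 0)"
    then show "q = L + int m" using m1 m2 by (metis linorder_neqE_linordered_idom)
  qed
  have "x (padic_ord x) \<noteq> 0 \<and> (\<forall>j<padic_ord x. x j = 0)"
    unfolding padic_ord_def by (rule theI'[OF uniq])
  then show ?thesis unfolding val_ge_def by blast
qed

lemma padic_norm_le_iff:
  assumes x: "x \<in> padic p"
  shows "padic_norm p x \<le> real p powi (- n) \<longleftrightarrow> val_ge x n"
proof (cases "x = padic_zero")
  case True then show ?thesis unfolding padic_norm_def by simp
next
  case False
  note o = padic_ord_props[OF x False]
  have "val_ge x n \<longleftrightarrow> n \<le> padic_ord x"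
    using o val_ge_mono unfolding val_ge_def by (metis not_le)
  moreover have "real p powi (- padic_ord x) \<le> real p powi (- n) \<longleftrightarrow> n \<le> padic_ord x"
  proof
    assume "real p powi (- padic_ord x) \<le> real p powi (- n)"
    then show "n \<le> padic_ord x"
      using power_int_strict_increasing[of "- n" "- padic_ord x" "real p"] p_gt_1 by force
  next
    assume "n \<le> padic_ord x"
    then show "real p powi (- padic_ord x) \<le> real p powi (- n)"
      using power_int_increasing[of "- padic_ord x" "- n" "real p"] p_gt_1 by force
  qed
  ultimately show ?thesis unfolding padic_norm_def using False by simp
qed

lemma val_ge_of_padic_norm_less:
  assumes x: "x \<in> padic p" and l: "padic_norm p x < real p powi (- n + 1)"
  shows "val_ge x n"
proof (cases "x = padic_zero")
  case True then show ?thesis by simp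
next
  case False
  note o = padic_ord_props[OF x False]
  have "real p powi (- padic_ord x) < real p powi (- n + 1)" using l False unfolding padic_norm_def
    by simp
  then have "- padic_ord x < - n + 1"
    using power_int_increasing[of "- n + 1" "- padic_ord x" "real p"] p_gt_1 by force
  then have "n \<le> padic_ord x" by simp
  then show ?thesis using o val_ge_mono by blast
qed

lemma padic_norm_gt_1_iff: "x \<in> padic p \<Longrightarrow> padic_norm p x > 1 \<longleftrightarrow> \<not> val_ge x 0"
  using padic_norm_le_iff[of x 0] by auto

end

section \<open>The space Q_p(X)\<close>

definition vagree :: "'x set \<Rightarrow> int \<Rightarrow> 'x vec \<Rightarrow> 'x vec \<Rightarrow> bool" where
  "vagree X n \<xi> \<eta> \<longleftrightarrow> (\<forall>i\<in>X. agree n (\<xi> i) (\<eta> i))"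

definition vval_ge :: "'x set \<Rightarrow> 'x vec \<Rightarrow> int \<Rightarrow> bool" where
  "vval_ge X \<xi> n \<longleftrightarrow> (\<forall>i\<in>X. val_ge (\<xi> i) n)"

definition vshift :: "'x set \<Rightarrow> int \<Rightarrow> 'x vec \<Rightarrow> 'x vec" where
  "vshift X j \<xi> = (\<lambda>i\<in>X. shift j (\<xi> i))"

abbreviation vsub :: "nat \<Rightarrow> 'x set \<Rightarrow> 'x vec \<Rightarrow> 'x vec \<Rightarrow> 'x vec" where
  "vsub p X \<xi> \<eta> \<equiv> vadd p X \<xi> (vneg p X \<eta>)"

locale padic_space = padic_base +
  fixes X :: "'x set"
begin

lemma QpX_iff: "\<xi> \<in> QpX p X \<longleftrightarrow> \<xi> \<in> PiE X (\<lambda>_. padic p) \<and> finite {i\<in>X. \<not> val_ge (\<xi> i) 0}"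
proof -
  have "\<xi> \<in> PiE X (\<lambda>_. padic p) \<Longrightarrow> {i \<in> X. padic_norm p (\<xi> i) > 1} = {i\<in>X. \<not> val_ge (\<xi> i) 0}"
    using padic_norm_gt_1_iff by (auto simp: PiE_iff)
  then show ?thesis unfolding QpX_def by auto
qed

lemma QpX_padic: "\<xi> \<in> QpX p X \<Longrightarrow> i \<in> X \<Longrightarrow> \<xi> i \<in> padic p"
  unfolding QpX_def by (auto simp: PiE_iff)

lemma QpX_ext: "\<xi> \<in> QpX p X \<Longrightarrow> \<xi> \<in> extensional X"
  unfolding QpX_def by (auto simp: PiE_iff)

lemma QpX_eqI:
  assumes "\<xi> \<in> QpX p X" "\<eta> \<in> QpX p X" "\<And>n. vagree X n \<xi> \<eta>"
  shows "\<xi> = \<eta>"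
proof (rule extensionalityI[OF QpX_ext[OF assms(1)] QpX_ext[OF assms(2)]])
  fix i assume i: "i \<in> X"
  show "\<xi> i = \<eta> i"
  proof
    fix k show "\<xi> i k = \<eta> i k" using assms(3)[of "k+1"] i unfolding vagree_def agree_def by auto
  qed
qed

lemma QpX_vval_ge_ex: "\<xi> \<in> QpX p X \<Longrightarrow> \<exists>n\<le>0. vval_ge X \<xi> n"
proof -
  assume x: "\<xi> \<in> QpX p X"
  define B where "B = {i\<in>X. \<not> val_ge (\<xi> i) 0}"
  have fB: "finite B" using x unfolding QpX_iff B_def by blast
  have "\<forall>i\<in>B. \<exists>L. val_ge (\<xi> i) L" using QpX_padic[OF x] padic_val_ge_ex unfolding B_def by blast
  then obtain L where L: "\<forall>i\<in>B. val_ge (\<xi> i) (L i)" by metis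
  define n where "n = min 0 (if B = {} then 0 else Min (L ` B))"
  have "vval_ge X \<xi> n" unfolding vval_ge_def
  proof
    fix i assume i: "i \<in> X"
    show "val_ge (\<xi> i) n"
    proof (cases "i \<in> B")
      case True
      have "Min (L ` B) \<le> L i" using fB True by (intro Min_le) auto
      then have "n \<le> L i" unfolding n_def using True by auto
      then show ?thesis using L True val_ge_mono by blast
    next
      case False
      then have "val_ge (\<xi> i) 0" using i unfolding B_def by blast
      then show ?thesis unfolding n_def by (rule val_ge_mono) simp
    qed
  qed
  then show ?thesis unfolding n_def by (intro exI[of _ n]) (simp add: n_def)
qed

lemma vzero_QpX[simp]: "vzero X \<in> QpX p X"
  unfolding QpX_iff vzero_def using p_pos by auto

lemma vadd_QpX[simp]: "\<xi> \<in> QpX p X \<Longrightarrow> \<eta> \<in> QpX p X \<Longrightarrow> vadd p X \<xi> \<eta> \<in> QpX p X"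
proof -
  assume a: "\<xi> \<in> QpX p X" "\<eta> \<in> QpX p X"
  have pad: "vadd p X \<xi> \<eta> \<in> PiE X (\<lambda>_. padic p)"
    using a QpX_padic[OF a(1)] QpX_padic[OF a(2)] padic_add_closed unfolding vadd_def by auto
  have "{i\<in>X. \<not> val_ge (vadd p X \<xi> \<eta> i) 0} \<subseteq> {i\<in>X. \<not> val_ge (\<xi> i) 0} \<union> {i\<in>X. \<not> val_ge (\<eta> i) 0}"
  proof
    fix i assume "i \<in> {i\<in>X. \<not> val_ge (vadd p X \<xi> \<eta> i) 0}"
    then have i: "i \<in> X" and n1: "\<not> val_ge (vadd p X \<xi> \<eta> i) 0" by auto
    show "i \<in> {i\<in>X. \<not> val_ge (\<xi> i) 0} \<union> {i\<in>X. \<not> val_ge (\<eta> i) 0}"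
    proof (rule ccontr)
      assume "i \<notin> {i\<in>X. \<not> val_ge (\<xi> i) 0} \<union> {i\<in>X. \<not> val_ge (\<eta> i) 0}"
      then have l: "val_ge (\<xi> i) 0" "val_ge (\<eta> i) 0" using i by auto
      have "agree 0 (padic_add p (\<xi> i) (\<eta> i)) (padic_add p padic_zero padic_zero)"
        using l QpX_padic[OF a(1) i] QpX_padic[OF a(2) i] val_ge_iff_agree_zero
        by (intro agree_add) auto
      then show False using n1 i padic_add_zero[of padic_zero] val_ge_iff_agree_zero
        unfolding vadd_def by simp
    qed
  qed
  then show ?thesis using pad a unfolding QpX_iff by (meson finite_UnI finite_subset)
qed

lemma vneg_QpX[simp]: "\<xi> \<in> QpX p X \<Longrightarrow> vneg p X \<xi> \<in> QpX p X"
proof -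
  assume a: "\<xi> \<in> QpX p X"
  have pad: "vneg p X \<xi> \<in> PiE X (\<lambda>_. padic p)"
    using a QpX_padic[OF a(1)] padic_neg_closed unfolding vneg_def by auto
  have "{i\<in>X. \<not> val_ge (vneg p X \<xi> i) 0} \<subseteq> {i\<in>X. \<not> val_ge (\<xi> i) 0}"
  proof clarify
    fix i assume i: "i \<in> X" and n: "\<not> val_ge (vneg p X \<xi> i) 0" "val_ge (\<xi> i) 0"
    have "agree 0 (padic_neg p (\<xi> i)) (padic_neg p padic_zero)"
      using n(2) QpX_padic[OF a(1) i] val_ge_iff_agree_zero
      by (intro agree_neg) auto
    moreover have "padic_neg p padic_zero = padic_zero"
      by (rule trunc_inj[OF p_pos]) (auto simp: trunc_padic_neg padic_neg_closed)
    ultimately show False using n(1) i val_ge_iff_agree_zero unfolding vneg_def by simp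
  qed
  then show ?thesis using pad a unfolding QpX_iff by (meson finite_subset)
qed

lemma padic_mul_zero: "c \<in> padic p \<Longrightarrow> padic_mul p c padic_zero = padic_zero"
proof (rule trunc_inj[OF p_pos])
  assume c: "c \<in> padic p"
  then show "padic_mul p c padic_zero \<in> padic p" by (simp add: padic_mul_closed)
  show "padic_zero \<in> padic p" using p_pos by simp
  fix n
  obtain L where L: "val_ge c L" using padic_val_ge_ex[OF c] by blast
  have "padic_trunc p (padic_mul p c padic_zero) n = rat_mod
    (padic_trunc p c n * padic_trunc p padic_zero (n - L)) (ppow p n)"
    by (rule padic_mul_trunc_gen[OF p_pos c _ L val_ge_padic_zero]) (use p_pos in auto)
  then show "padic_trunc p (padic_mul p c padic_zero) n = padic_trunc p padic_zero n" by simp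
qed

lemma vsmul_QpX[simp]: "c \<in> padic_int p \<Longrightarrow> \<xi> \<in> QpX p X \<Longrightarrow> vsmul p X c \<xi> \<in> QpX p X"
proof -
  assume c: "c \<in> padic_int p" and a: "\<xi> \<in> QpX p X"
  have cp: "c \<in> padic p" using c unfolding padic_int_def by auto
  have pad: "vsmul p X c \<xi> \<in> PiE X (\<lambda>_. padic p)"
    using a QpX_padic[OF a(1)] padic_mul_closed cp unfolding vsmul_def by auto
  have "{i\<in>X. \<not> val_ge (vsmul p X c \<xi> i) 0} \<subseteq> {i\<in>X. \<not> val_ge (\<xi> i) 0}"
  proof clarify
    fix i assume i: "i \<in> X" and n: "\<not> val_ge (vsmul p X c \<xi> i) 0" "val_ge (\<xi> i) 0"
    have "agree 0 (padic_mul p c (\<xi> i)) (padic_mul p c padic_zero)"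
      using n(2) QpX_padic[OF a(1) i] val_ge_iff_agree_zero c p_pos
      by (intro agree_padic_mul) auto
    then show False using n(1) i val_ge_iff_agree_zero padic_mul_zero[OF cp] unfolding vsmul_def
      by simp
  qed
  then show ?thesis using pad a unfolding QpX_iff by (meson finite_subset)
qed

lemma vshift_QpX: "\<xi> \<in> QpX p X \<Longrightarrow> j \<ge> 0 \<or> vval_ge X \<xi> (- j) \<Longrightarrow> vshift X j \<xi> \<in> QpX p X"
proof -
  assume a: "\<xi> \<in> QpX p X" and j: "j \<ge> 0 \<or> vval_ge X \<xi> (- j)"
  have pad: "vshift X j \<xi> \<in> PiE X (\<lambda>_. padic p)"
    using a QpX_padic[OF a(1)] shift_padic unfolding vshift_def by auto
  have "{i\<in>X. \<not> val_ge (vshift X j \<xi> i) 0} \<subseteq> {i\<in>X. \<not> val_ge (\<xi> i) 0}"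
  proof clarify
    fix i assume i: "i \<in> X" and n: "\<not> val_ge (vshift X j \<xi> i) 0" "val_ge (\<xi> i) 0"
    have "val_ge (\<xi> i) (- j)" using j n(2) i val_ge_mono unfolding vval_ge_def by auto
    then have "val_ge (shift j (\<xi> i)) (- j + j)" using val_ge_shift by blast
    then show False using n(1) i unfolding vshift_def by simp
  qed
  then show ?thesis using pad a unfolding QpX_iff by (meson finite_subset)
qed

lemma restrict_eq_QpX: "\<xi> \<in> QpX p X \<Longrightarrow> (\<And>i. i \<in> X \<Longrightarrow> f i = \<xi> i) \<Longrightarrow> (\<lambda>i\<in>X. f i) = \<xi>"
  by (rule extensionalityI[OF restrict_extensional QpX_ext]) auto

lemma vadd_comm: "\<xi> \<in> QpX p X \<Longrightarrow> \<eta> \<in> QpX p X \<Longrightarrow> vadd p X \<xi> \<eta> = vadd p X \<eta> \<xi>"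
  unfolding vadd_def using padic_add_comm QpX_padic by (intro restrict_ext) blast

lemma vadd_assoc: "\<xi> \<in> QpX p X \<Longrightarrow> \<eta> \<in> QpX p X \<Longrightarrow> \<zeta> \<in> QpX p X \<Longrightarrow>
   vadd p X (vadd p X \<xi> \<eta>) \<zeta> = vadd p X \<xi> (vadd p X \<eta> \<zeta>)"
  unfolding vadd_def using padic_add_assoc QpX_padic by (intro restrict_ext) auto

lemma vadd_zero: "\<xi> \<in> QpX p X \<Longrightarrow> vadd p X \<xi> (vzero X) = \<xi>"
  unfolding vadd_def vzero_def by (rule restrict_eq_QpX) (auto simp: padic_add_zero QpX_padic)

lemma vzero_add: "\<xi> \<in> QpX p X \<Longrightarrow> vadd p X (vzero X) \<xi> = \<xi>"
  using vadd_comm[OF vzero_QpX, of \<xi>] vadd_zero[of \<xi>] by simp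

lemma vadd_neg: "\<xi> \<in> QpX p X \<Longrightarrow> vadd p X \<xi> (vneg p X \<xi>) = vzero X"
  unfolding vadd_def vzero_def vneg_def using padic_add_neg QpX_padic
  by (intro restrict_ext) auto

lemma vneg_vneg: "\<xi> \<in> QpX p X \<Longrightarrow> vneg p X (vneg p X \<xi>) = \<xi>"
  unfolding vneg_def by (rule restrict_eq_QpX) (auto simp: padic_neg_neg QpX_padic)

lemma vneg_vadd: "\<xi> \<in> QpX p X \<Longrightarrow> \<eta> \<in> QpX p X \<Longrightarrow>
   vneg p X (vadd p X \<xi> \<eta>) = vadd p X (vneg p X \<xi>) (vneg p X \<eta>)"
  unfolding vadd_def vneg_def using padic_neg_add QpX_padic by (intro restrict_ext) auto

lemma vadd_left_comm: "\<xi> \<in> QpX p X \<Longrightarrow> \<eta> \<in> QpX p X \<Longrightarrow> \<zeta> \<in> QpX p X \<Longrightarrow>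
   vadd p X \<xi> (vadd p X \<eta> \<zeta>) = vadd p X \<eta> (vadd p X \<xi> \<zeta>)"
  by (simp add: vadd_assoc[symmetric] vadd_comm[of \<xi> \<eta>])

lemma vadd_neg_cancel: "\<xi> \<in> QpX p X \<Longrightarrow> \<eta> \<in> QpX p X \<Longrightarrow> vadd p X \<xi> (vadd p X (vneg p X \<xi>) \<eta>) = \<eta>"
  by (simp add: vadd_assoc[symmetric] vadd_neg vzero_add)

lemma vneg_zero: "vneg p X (vzero X) = vzero X"
  using vadd_neg[OF vzero_QpX] vzero_add[OF vneg_QpX[OF vzero_QpX]] by simp

lemma vagree_refl[simp]: "vagree X n \<xi> \<xi>" unfolding vagree_def agree_def by simp

lemma vagree_sym: "vagree X n \<xi> \<eta> \<Longrightarrow> vagree X n \<eta> \<xi>" unfolding vagree_def using agree_sym by blast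

lemma vagree_trans: "vagree X n \<xi> \<eta> \<Longrightarrow> vagree X n \<eta> \<zeta> \<Longrightarrow> vagree X n \<xi> \<zeta>"
  unfolding vagree_def using agree_trans by blast

lemma vagree_mono: "m \<le> n \<Longrightarrow> vagree X n \<xi> \<eta> \<Longrightarrow> vagree X m \<xi> \<eta>"
  unfolding vagree_def using agree_mono by blast

lemma vagree_add: "\<xi> \<in> QpX p X \<Longrightarrow> \<eta> \<in> QpX p X \<Longrightarrow> \<xi>' \<in> QpX p X \<Longrightarrow> \<eta>' \<in> QpX p X \<Longrightarrow>
  vagree X n \<xi> \<xi>' \<Longrightarrow> vagree X n \<eta> \<eta>' \<Longrightarrow> vagree X n (vadd p X \<xi> \<eta>) (vadd p X \<xi>' \<eta>')"
  unfolding vagree_def vadd_def using agree_add QpX_padic by simp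

lemma vagree_neg: "\<xi> \<in> QpX p X \<Longrightarrow> \<xi>' \<in> QpX p X \<Longrightarrow>
  vagree X n \<xi> \<xi>' \<Longrightarrow> vagree X n (vneg p X \<xi>) (vneg p X \<xi>')"
  unfolding vagree_def vneg_def using agree_neg QpX_padic by simp

lemma vagree_smul: "c \<in> padic_int p \<Longrightarrow> \<xi> \<in> QpX p X \<Longrightarrow> \<xi>' \<in> QpX p X \<Longrightarrow>
  vagree X n \<xi> \<xi>' \<Longrightarrow> vagree X n (vsmul p X c \<xi>) (vsmul p X c \<xi>')"
  unfolding vagree_def vsmul_def using agree_padic_mul QpX_padic by simp

lemma vval_ge_iff_vagree_zero: "vval_ge X \<xi> n \<longleftrightarrow> vagree X n \<xi> (vzero X)"
  unfolding vval_ge_def vagree_def vzero_def using val_ge_iff_agree_zero by simp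

lemma vval_ge_diff_iff_vagree: "\<xi> \<in> QpX p X \<Longrightarrow> \<eta> \<in> QpX p X \<Longrightarrow>
  vval_ge X (vadd p X \<xi> (vneg p X \<eta>)) n \<longleftrightarrow> vagree X n \<xi> \<eta>"
  unfolding vval_ge_def vagree_def vadd_def vneg_def using val_ge_diff_iff_agree QpX_padic by simp

lemma vval_ge_mono: "m \<le> n \<Longrightarrow> vval_ge X \<xi> n \<Longrightarrow> vval_ge X \<xi> m"
  unfolding vval_ge_def using val_ge_mono by blast

lemma vval_ge_vadd: "\<xi> \<in> QpX p X \<Longrightarrow> \<eta> \<in> QpX p X \<Longrightarrow> vval_ge X \<xi> n \<Longrightarrow> vval_ge X \<eta> n \<Longrightarrow>
  vval_ge X (vadd p X \<xi> \<eta>) n"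
  using vagree_add[of \<xi> \<eta> "vzero X" "vzero X" n] vadd_zero[of "vzero X"]
    unfolding vval_ge_iff_vagree_zero by simp

lemma vval_ge_vneg: "\<xi> \<in> QpX p X \<Longrightarrow> vval_ge X \<xi> n \<Longrightarrow> vval_ge X (vneg p X \<xi>) n"
  using vagree_neg[of \<xi> "vzero X" n] vneg_zero unfolding vval_ge_iff_vagree_zero by simp

lemma vsmul_minus_one: "\<xi> \<in> QpX p X \<Longrightarrow> vsmul p X (padic_minus_one p) \<xi> = vneg p X \<xi>"
  unfolding vsmul_def vneg_def using padic_mul_minus_one QpX_padic by (intro restrict_ext) auto

lemma vsmul_ppow: "k \<ge> 0 \<Longrightarrow> \<xi> \<in> QpX p X \<Longrightarrow> vsmul p X (padic_ppow k) \<xi> = vshift X k \<xi>"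
  unfolding vsmul_def vshift_def using padic_mul_ppow QpX_padic by (intro restrict_ext) auto

lemma vshift_vshift: "vshift X a (vshift X b \<xi>) = vshift X (a + b) \<xi>"
  unfolding vshift_def by (intro restrict_ext) (auto simp: shift_shift)

lemma vshift_0: "\<xi> \<in> QpX p X \<Longrightarrow> vshift X 0 \<xi> = \<xi>"
  unfolding vshift_def by (rule restrict_eq_QpX) (auto simp: shift_0)

lemma vval_ge_vshift: "vval_ge X (vshift X j \<xi>) (n + j) \<longleftrightarrow> vval_ge X \<xi> n"
  unfolding vval_ge_def vshift_def using val_ge_shift by simp


lemma vnorm_bdd: "\<xi> \<in> QpX p X \<Longrightarrow> bdd_above (insert 0 ((\<lambda>i. padic_norm p (\<xi> i)) ` X))"
proof -
  assume a: "\<xi> \<in> QpX p X"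
  define B where "B = {i\<in>X. \<not> val_ge (\<xi> i) 0}"
  have fB: "finite B" using a unfolding QpX_iff B_def by blast
  define M where "M = max 1 (Max (insert 0 ((\<lambda>i. padic_norm p (\<xi> i)) ` B)))"
  have "\<forall>y\<in>insert 0 ((\<lambda>i. padic_norm p (\<xi> i)) ` X). y \<le> M"
  proof
    fix y assume "y \<in> insert 0 ((\<lambda>i. padic_norm p (\<xi> i)) ` X)"
    then consider "y = 0" | i where "i \<in> X" "y = padic_norm p (\<xi> i)" by blast
    then show "y \<le> M"
    proof cases
      case 1 then show ?thesis unfolding M_def by simp
    next
      case 2
      show ?thesis
      proof (cases "i \<in> B")
        case True
        then have "y \<le> Max (insert 0 ((\<lambda>i. padic_norm p (\<xi> i)) ` B))" using fB 2
          by (intro Max_ge) auto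
        then show ?thesis unfolding M_def by simp
      next
        case False
        then have "val_ge (\<xi> i) 0" using 2 unfolding B_def by blast
        then have "y \<le> 1" using padic_norm_le_iff[OF QpX_padic[OF a 2(1)], of 0] 2 by simp
        then show ?thesis unfolding M_def by simp
      qed
    qed
  qed
  then show ?thesis by (intro bdd_aboveI[where M = M]) blast
qed

lemma vnorm_ge: assumes "\<xi> \<in> QpX p X" "i \<in> X" shows "padic_norm p (\<xi> i) \<le> vnorm p X \<xi>"
  unfolding vnorm_def by (rule cSup_upper) (use assms vnorm_bdd[OF assms(1)] in auto)

lemma vnorm_le_iff: "\<xi> \<in> QpX p X \<Longrightarrow> vnorm p X \<xi> \<le> real p powi (- n) \<longleftrightarrow> vval_ge X \<xi> n"
proof
  assume a: "\<xi> \<in> QpX p X" "vnorm p X \<xi> \<le> real p powi (- n)"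
  show "vval_ge X \<xi> n" unfolding vval_ge_def
  proof
    fix i assume i: "i \<in> X"
    then have "padic_norm p (\<xi> i) \<le> real p powi (- n)" using vnorm_ge[OF a(1) i] a(2) by linarith
    then show "val_ge (\<xi> i) n" using padic_norm_le_iff[OF QpX_padic[OF a(1) i]] by blast
  qed
next
  assume a: "\<xi> \<in> QpX p X" "vval_ge X \<xi> n"
  show "vnorm p X \<xi> \<le> real p powi (- n)" unfolding vnorm_def
  proof (rule cSup_least)
    fix y assume "y \<in> insert 0 ((\<lambda>i. padic_norm p (\<xi> i)) ` X)"
    then show "y \<le> real p powi (- n)"
      using a padic_norm_le_iff[OF QpX_padic[OF a(1)]] unfolding vval_ge_def by auto
  qed simp
qed

lemma vval_ge_of_vnorm_less: "\<xi> \<in> QpX p X \<Longrightarrow> vnorm p X \<xi> < real p powi (- n + 1) \<Longrightarrow> vval_ge X \<xi> n"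
  unfolding vval_ge_def using vnorm_ge val_ge_of_padic_norm_less QpX_padic by (meson le_less_trans)

lemma vsub_vsub_cancel: "\<xi> \<in> QpX p X \<Longrightarrow> \<eta> \<in> QpX p X \<Longrightarrow> vsub p X \<xi> (vsub p X \<xi> \<eta>) = \<eta>"
  by (simp add: vneg_vadd vneg_vneg vadd_neg_cancel)

lemma vadd_vsub_cancel: "\<xi> \<in> QpX p X \<Longrightarrow> \<eta> \<in> QpX p X \<Longrightarrow> vadd p X \<xi> (vsub p X \<eta> \<xi>) = \<eta>"
  using vadd_left_comm[of \<xi> \<eta> "vneg p X \<xi>"] by (simp add: vadd_neg vadd_zero)

end

section \<open>Bounded operators\<close>

text \<open>\<open>op_bound p X T m\<close> says \<open>||T|| \<le> p^m\<close>, expressed through valuations.\<close>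

definition op_bound :: "nat \<Rightarrow> 'x set \<Rightarrow> 'x oper \<Rightarrow> int \<Rightarrow> bool" where
  "op_bound p X T m \<longleftrightarrow> (\<forall>\<xi>\<in>QpX p X. \<forall>n. vval_ge X \<xi> n \<longrightarrow> vval_ge X (T \<xi>) (n - m))"

context padic_space
begin

lemma op_comp_apply[simp]: "\<xi> \<in> QpX p X \<Longrightarrow> op_comp p X S T \<xi> = S (T \<xi>)"
  unfolding op_comp_def by simp

lemma op_add_apply[simp]: "\<xi> \<in> QpX p X \<Longrightarrow> op_add p X S T \<xi> = vadd p X (S \<xi>) (T \<xi>)"
  unfolding op_add_def by simp

lemma op_neg_apply[simp]: "\<xi> \<in> QpX p X \<Longrightarrow> op_neg p X T \<xi> = vneg p X (T \<xi>)"
  unfolding op_neg_def by simp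

lemma op_id_apply[simp]: "\<xi> \<in> QpX p X \<Longrightarrow> op_id p X \<xi> = \<xi>"
  unfolding op_id_def by simp

lemma op_diff_apply[simp]: "\<xi> \<in> QpX p X \<Longrightarrow> op_diff p X S T \<xi> = vadd p X (S \<xi>) (vneg p X (T \<xi>))"
  unfolding op_diff_def by simp

lemma Bops_QpX[simp]: "T \<in> Bops p X \<Longrightarrow> \<xi> \<in> QpX p X \<Longrightarrow> T \<xi> \<in> QpX p X"
  unfolding Bops_def by auto

lemma Bops_ext: "T \<in> Bops p X \<Longrightarrow> T \<in> extensional (QpX p X)"
  unfolding Bops_def by auto

lemma Bops_add: "T \<in> Bops p X \<Longrightarrow> \<xi> \<in> QpX p X \<Longrightarrow> \<eta> \<in> QpX p X \<Longrightarrow> T (vadd p X \<xi> \<eta>) = vadd p X (T \<xi>) (T \<eta>)"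
  unfolding Bops_def by auto

lemma Bops_smul: "T \<in> Bops p X \<Longrightarrow> c \<in> padic_int p \<Longrightarrow> \<xi> \<in> QpX p X \<Longrightarrow>
  T (vsmul p X c \<xi>) = vsmul p X c (T \<xi>)"
  unfolding Bops_def by auto

lemma Bops_tau: "T \<in> Bops p X \<Longrightarrow> tau_continuous p X T"
  unfolding Bops_def by auto

lemma Bops_neg:
  assumes T: "T \<in> Bops p X" and x: "\<xi> \<in> QpX p X"
  shows "T (vneg p X \<xi>) = vneg p X (T \<xi>)"
proof -
  have "T (vneg p X \<xi>) = T (vsmul p X (padic_minus_one p) \<xi>)" using vsmul_minus_one[OF x] by simp
  also have "\<dots> = vsmul p X (padic_minus_one p) (T \<xi>)" using Bops_smul[OF T padic_minus_one_int x] .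
  also have "\<dots> = vneg p X (T \<xi>)" using vsmul_minus_one[OF Bops_QpX[OF T x]] .
  finally show ?thesis .
qed

lemma Bops_zero:
  assumes T: "T \<in> Bops p X"
  shows "T (vzero X) = vzero X"
proof -
  have z: "vzero X \<in> QpX p X" using vzero_QpX .
  have "T (vzero X) = T (vadd p X (vzero X) (vneg p X (vzero X)))" using vadd_neg[OF z] by simp
  also have "\<dots> = vadd p X (T (vzero X)) (T (vneg p X (vzero X)))"
    using Bops_add[OF T z vneg_QpX[OF z]] .
  also have "\<dots> = vadd p X (T (vzero X)) (vneg p X (T (vzero X)))" using Bops_neg[OF T z] by simp
  also have "\<dots> = vzero X" using vadd_neg[OF Bops_QpX[OF T z]] .
  finally show ?thesis .
qed

lemma Bops_shift:
  assumes T: "T \<in> Bops p X" and j: "j \<ge> 0" and x: "\<xi> \<in> QpX p X"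
  shows "T (vshift X j \<xi>) = vshift X j (T \<xi>)"
proof -
  have "T (vshift X j \<xi>) = T (vsmul p X (padic_ppow j) \<xi>)" using vsmul_ppow[OF j x] by simp
  also have "\<dots> = vsmul p X (padic_ppow j) (T \<xi>)" using Bops_smul[OF T padic_ppow_int[OF j] x] .
  also have "\<dots> = vshift X j (T \<xi>)" using vsmul_ppow[OF j Bops_QpX[OF T x]] .
  finally show ?thesis .
qed

lemma op_bound_mono: "op_bound p X T m \<Longrightarrow> m \<le> m' \<Longrightarrow> op_bound p X T m'"
  unfolding op_bound_def using vval_ge_mono by (meson diff_left_mono)

lemma op_bound_vagree_additive:
  assumes hQ: "\<And>\<xi>. \<xi> \<in> QpX p X \<Longrightarrow> h \<xi> \<in> QpX p X"
    and hadd: "\<And>\<xi> \<eta>. \<xi> \<in> QpX p X \<Longrightarrow> \<eta> \<in> QpX p X \<Longrightarrow> h (vadd p X \<xi> \<eta>) = vadd p X (h \<xi>) (h \<eta>)"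
    and hneg: "\<And>\<xi>. \<xi> \<in> QpX p X \<Longrightarrow> h (vneg p X \<xi>) = vneg p X (h \<xi>)"
    and hb: "op_bound p X h m"
    and x: "\<xi> \<in> QpX p X" and y: "\<eta> \<in> QpX p X" and a: "vagree X n \<xi> \<eta>"
  shows "vagree X (n - m) (h \<xi>) (h \<eta>)"
proof -
  have "vval_ge X (vadd p X \<xi> (vneg p X \<eta>)) n" using vval_ge_diff_iff_vagree[OF x y] a by simp
  moreover have "vadd p X \<xi> (vneg p X \<eta>) \<in> QpX p X" using vadd_QpX[OF x vneg_QpX[OF y]] .
  ultimately have "vval_ge X (h (vadd p X \<xi> (vneg p X \<eta>))) (n - m)" using hb unfolding op_bound_def
    by blast
  moreover have "h (vadd p X \<xi> (vneg p X \<eta>)) = vadd p X (h \<xi>) (vneg p X (h \<eta>))"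
    using hadd[OF x vneg_QpX[OF y]] hneg[OF y] by simp
  ultimately show ?thesis using vval_ge_diff_iff_vagree[OF hQ[OF x] hQ[OF y]] by simp
qed

lemma op_bound_vagree:
  assumes "T \<in> Bops p X" "op_bound p X T m" "\<xi> \<in> QpX p X" "\<eta> \<in> QpX p X" "vagree X n \<xi> \<eta>"
  shows "vagree X (n - m) (T \<xi>) (T \<eta>)"
  using op_bound_vagree_additive[of T, OF Bops_QpX[OF assms(1)] Bops_add[OF assms(1)]
    Bops_neg[OF assms(1)]
      assms(2-5)] .

lemma op_smul_minus_one: "T \<in> Bops p X \<Longrightarrow> op_smul p X (padic_minus_one p) T = op_neg p X T"
  unfolding op_smul_def op_neg_def
proof (intro restrict_ext)
  fix \<xi> assume "T \<in> Bops p X" "\<xi> \<in> QpX p X"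
  then show "vsmul p X (padic_minus_one p) (T \<xi>) = vneg p X (T \<xi>)"
    using vsmul_minus_one[OF Bops_QpX] by blast
qed


lemma Bops_vsub:
  "T \<in> Bops p X \<Longrightarrow> \<xi> \<in> QpX p X \<Longrightarrow> \<eta> \<in> QpX p X \<Longrightarrow> T (vsub p X \<xi> \<eta>) = vsub p X (T \<xi>) (T \<eta>)"
  by (simp add: Bops_add Bops_neg)

lemma op_comp_assoc:
  "U \<in> Bops p X \<Longrightarrow> op_comp p X (op_comp p X S T) U = op_comp p X S (op_comp p X T U)"
  unfolding op_comp_def by (rule restrict_ext) simp

lemma op_comp_id_left: "T \<in> Bops p X \<Longrightarrow> op_comp p X (op_id p X) T = T"
  by (rule extensionalityI[OF _ Bops_ext]) (auto simp: op_comp_def)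

lemma op_bound_comp:
  assumes S: "S \<in> Bops p X" and T: "T \<in> Bops p X" and a: "op_bound p X S a" and b:
    "op_bound p X T b"
  shows "op_bound p X (op_comp p X S T) (a + b)"
  unfolding op_bound_def
proof (intro ballI allI impI)
  fix \<xi> n assume x: "\<xi> \<in> QpX p X" and l: "vval_ge X \<xi> n"
  have 1: "T \<xi> \<in> QpX p X" by (rule Bops_QpX[OF T x])
  have "vval_ge X (T \<xi>) (n - b)" using b x l unfolding op_bound_def by blast
  then have "vval_ge X (S (T \<xi>)) (n - b - a)" using a 1 unfolding op_bound_def by blast
  then show "vval_ge X (op_comp p X S T \<xi>) (n - (a + b))" using x by (simp add: algebra_simps)
qed

lemma op_bound_diff:
  assumes "S ` QpX p X \<subseteq> QpX p X" "T ` QpX p X \<subseteq> QpX p X" "op_bound p X S a" "op_bound p X T a"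
  shows "op_bound p X (op_diff p X S T) a"
  using assms unfolding op_bound_def by (simp add: image_subset_iff vval_ge_vadd vval_ge_vneg)

lemma op_bound_of_diff:
  assumes S: "S \<in> Bops p X" and T: "T \<in> Bops p X"
    and bS: "op_bound p X S a" and bST: "op_bound p X (op_diff p X S T) a"
  shows "op_bound p X T a"
  unfolding op_bound_def
proof (intro ballI allI impI)
  fix \<xi> n assume x: "\<xi> \<in> QpX p X" and l: "vval_ge X \<xi> n"
  have "vval_ge X (op_diff p X S T \<xi>) (n - a)" using bST x l unfolding op_bound_def by blast
  then have "vagree X (n - a) (S \<xi>) (T \<xi>)"
    using vval_ge_diff_iff_vagree[OF Bops_QpX[OF S x] Bops_QpX[OF T x]] x by simp
  moreover have "vagree X (n - a) (S \<xi>) (vzero X)"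
    using bS x l unfolding op_bound_def vval_ge_iff_vagree_zero by blast
  ultimately show "vval_ge X (T \<xi>) (n - a)"
    unfolding vval_ge_iff_vagree_zero using vagree_sym vagree_trans by blast
qed

end

section \<open>The topology tau; continuous operators are bounded\<close>

context padic_space
begin

lemma Qp_istopology: "istopology (\<lambda>U. U \<subseteq> padic p \<and>
     (\<forall>x\<in>U. \<exists>\<epsilon>>0. \<forall>y\<in>padic p. padic_dist p y x < \<epsilon> \<longrightarrow> y \<in> U))"
proof -
  define L where "L = (\<lambda>U. U \<subseteq> padic p \<and>
     (\<forall>x\<in>U. \<exists>\<epsilon>>0. \<forall>y\<in>padic p. padic_dist p y x < \<epsilon> \<longrightarrow> y \<in> U))"
  have i: "L (S \<inter> S')" if S: "L S" and S': "L S'" for S S'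
  proof -
    have "\<exists>\<epsilon>>0. \<forall>y\<in>padic p. padic_dist p y x < \<epsilon> \<longrightarrow> y \<in> S \<inter> S'" if x: "x \<in> S \<inter> S'" for x
    proof -
      obtain e1 where "e1 > 0" "\<forall>y\<in>padic p. padic_dist p y x < e1 \<longrightarrow> y \<in> S"
        using S x unfolding L_def by blast
      moreover obtain e2 where "e2 > 0" "\<forall>y\<in>padic p. padic_dist p y x < e2 \<longrightarrow> y \<in> S'"
        using S' x unfolding L_def by blast
      ultimately show ?thesis by (intro exI[of _ "min e1 e2"]) auto
    qed
    then show ?thesis using S S' unfolding L_def by blast
  qed
  have u: "L (\<Union>K)" if K: "\<forall>S\<in>K. L S" for K
  proof -
    have sub: "\<Union>K \<subseteq> padic p" using K unfolding L_def by blast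
    have ex: "\<forall>x\<in>\<Union>K. \<exists>\<epsilon>>0. \<forall>y\<in>padic p. padic_dist p y x < \<epsilon> \<longrightarrow> y \<in> \<Union>K"
    proof
      fix x assume "x \<in> \<Union>K"
      then obtain S where S: "S \<in> K" "x \<in> S" by blast
      then have "L S" using K by blast
      then obtain e where "e > 0" "\<forall>y\<in>padic p. padic_dist p y x < e \<longrightarrow> y \<in> S"
        using S(2) unfolding L_def by blast
      then show "\<exists>\<epsilon>>0. \<forall>y\<in>padic p. padic_dist p y x < \<epsilon> \<longrightarrow> y \<in> \<Union>K"
        using S(1) by (intro exI[of _ e]) auto
    qed
    show ?thesis unfolding L_def by (intro conjI sub ex)
  qed
  have "istopology L" unfolding istopology_def
  proof (intro conjI allI impI)
    fix S S' assume "L S" "L S'" then show "L (S \<inter> S')" by (rule i)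
  next
    fix K assume "\<forall>S\<in>K. L S" then show "L (\<Union>K)" by (rule u)
  qed
  then show ?thesis unfolding L_def .
qed

lemma dist_agree:
  assumes x: "x \<in> padic p" and y: "y \<in> padic p"
  shows "padic_dist p y x \<le> real p powi (- n) \<longleftrightarrow> agree n y x"
    and "padic_dist p y x < real p powi (- n + 1) \<Longrightarrow> agree n y x"
proof -
  have s: "padic_add p y (padic_neg p x) \<in> padic p" using x y
    by (simp add: padic_add_closed padic_neg_closed)
  show "padic_dist p y x \<le> real p powi (- n) \<longleftrightarrow> agree n y x"
    unfolding padic_dist_def using padic_norm_le_iff[OF s] val_ge_diff_iff_agree[OF y x] by simp
  show "padic_dist p y x < real p powi (- n + 1) \<Longrightarrow> agree n y x"
    unfolding padic_dist_def using val_ge_of_padic_norm_less[OF s] val_ge_diff_iff_agree[OF y x]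
      by simp
qed

lemma openin_Qp_iff: "openin (Qp_top p) U \<longleftrightarrow> U \<subseteq> padic p \<and> (\<forall>x\<in>U. \<exists>n. \<forall>y\<in>padic p. agree n y x \<longrightarrow>
  y \<in> U)"
proof -
  have "openin (Qp_top p) U \<longleftrightarrow> U \<subseteq> padic p \<and>
     (\<forall>x\<in>U. \<exists>\<epsilon>>0. \<forall>y\<in>padic p. padic_dist p y x < \<epsilon> \<longrightarrow> y \<in> U)"
    unfolding Qp_top_def using topology_inverse'[OF Qp_istopology] by simp
  also have "\<dots> \<longleftrightarrow> U \<subseteq> padic p \<and> (\<forall>x\<in>U. \<exists>n. \<forall>y\<in>padic p. agree n y x \<longrightarrow> y \<in> U)"
  proof (intro conj_cong refl ball_cong iffI)
    fix x assume U: "U \<subseteq> padic p" and "x \<in> U"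
    then have x: "x \<in> padic p" by blast
    {
      assume "\<exists>\<epsilon>>0. \<forall>y\<in>padic p. padic_dist p y x < \<epsilon> \<longrightarrow> y \<in> U"
      then obtain e where e: "e > 0" "\<forall>y\<in>padic p. padic_dist p y x < e \<longrightarrow> y \<in> U" by blast
      obtain k :: nat where k: "1 / e < real p ^ k" using real_arch_pow[of "real p" "1 / e"] p_gt_1
        by auto
      have "real p powi (- int k) < e"
        using k e p_gt_1 by (simp add: power_int_minus field_simps)
      then show "\<exists>n. \<forall>y\<in>padic p. agree n y x \<longrightarrow> y \<in> U"
        using e dist_agree(1)[OF x] by (intro exI[of _ "int k"]) force
    }
    {
      assume "\<exists>n. \<forall>y\<in>padic p. agree n y x \<longrightarrow> y \<in> U"
      then obtain n where n: "\<forall>y\<in>padic p. agree n y x \<longrightarrow> y \<in> U" by blast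
      show "\<exists>\<epsilon>>0. \<forall>y\<in>padic p. padic_dist p y x < \<epsilon> \<longrightarrow> y \<in> U"
        using n dist_agree(2)[OF x] p_gt_1 by (intro exI[of _ "real p powi (- n + 1)"]) auto
    }
  qed
  finally show ?thesis .
qed

lemma openin_Qp_agree: "openin (Qp_top p) {y \<in> padic p. agree n y x}"
  unfolding openin_Qp_iff using agree_trans by blast

lemma openin_Qp_padic: "openin (Qp_top p) (padic p)"
  unfolding openin_Qp_iff by blast

lemma topspace_Qp[simp]: "topspace (Qp_top p) = padic p"
proof
  show "topspace (Qp_top p) \<subseteq> padic p" unfolding topspace_def using openin_Qp_iff by blast
  show "padic p \<subseteq> topspace (Qp_top p)" using openin_Qp_padic openin_subset by blast
qed

abbreviation "PT \<equiv> product_topology (\<lambda>i. Qp_top p) X"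

lemma openin_PT_cylinder:
  assumes "finite F"
  shows "openin PT (PiE X (\<lambda>i. if i \<in> F then {y \<in> padic p. agree n y (a i)} else padic p))"
proof (rule product_topology_basis)
  show "openin (Qp_top p) (if i \<in> F then {y \<in> padic p. agree n y (a i)} else padic p)" for i
    using openin_Qp_agree openin_Qp_padic by simp
  show "finite {i. (if i \<in> F then {y \<in> padic p. agree n y (a i)} else padic p) \<noteq> topspace
    (Qp_top p)}"
    by (rule finite_subset[OF _ assms]) auto
qed

lemma PT_cylinder_nbhd:
  assumes W: "openin PT W" and x0: "\<xi>0 \<in> W"
  shows "\<exists>F n. finite F \<and> (\<forall>\<xi>\<in>PiE X (\<lambda>_. padic p). (\<forall>j\<in>F. j \<in> X \<longrightarrow> agree n (\<xi> j) (\<xi>0 j)) \<longrightarrow> \<xi> \<in> W)"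
proof -
  obtain Xs where Xs: "\<xi>0 \<in> PiE X Xs" "\<forall>i. openin (Qp_top p) (Xs i)"
    "finite {i. Xs i \<noteq> topspace (Qp_top p)}" "PiE X Xs \<subseteq> W"
    using product_topology_open_contains_basis[OF W x0] by blast
  define F where "F = {i. Xs i \<noteq> padic p}"
  have fF: "finite F" using Xs(3) unfolding F_def by simp
  have "\<forall>i\<in>F\<inter>X. \<exists>n. \<forall>y\<in>padic p. agree n y (\<xi>0 i) \<longrightarrow> y \<in> Xs i"
    using Xs(1,2) openin_Qp_iff by (auto simp: PiE_iff)
  then obtain nf where nf: "\<forall>i\<in>F\<inter>X. \<forall>y\<in>padic p. agree (nf i) y (\<xi>0 i) \<longrightarrow> y \<in> Xs i" by metis
  define n where "n = Max (insert 0 (nf ` (F \<inter> X)))"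
  have nn: "i \<in> F \<inter> X \<Longrightarrow> nf i \<le> n" for i unfolding n_def using fF by (intro Max_ge) auto
  have "\<forall>\<xi>\<in>PiE X (\<lambda>_. padic p). (\<forall>j\<in>F. j \<in> X \<longrightarrow> agree n (\<xi> j) (\<xi>0 j)) \<longrightarrow> \<xi> \<in> W"
  proof (intro ballI impI)
    fix \<xi> assume x: "\<xi> \<in> PiE X (\<lambda>_. padic p)" and a: "\<forall>j\<in>F. j \<in> X \<longrightarrow> agree n (\<xi> j) (\<xi>0 j)"
    have "\<xi> \<in> PiE X Xs"
    proof (subst PiE_iff, intro conjI ballI)
      fix i assume i: "i \<in> X"
      show "\<xi> i \<in> Xs i"
      proof (cases "i \<in> F")
        case True
        then show ?thesis using nf a nn[of i] i x agree_mono by (force simp: PiE_iff)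
      next
        case False then show ?thesis using x i unfolding F_def by (auto simp: PiE_iff)
      qed
    next
      show "\<xi> \<in> extensional X" using x by (simp add: PiE_iff)
    qed
    then show "\<xi> \<in> W" using Xs(4) by blast
  qed
  then show ?thesis using fF by blast
qed

lemma box_subset_QpX: "finite P \<Longrightarrow> box p X P \<subseteq> QpX p X"
proof
  fix \<xi> assume P: "finite P" and x: "\<xi> \<in> box p X P"
  have "{i\<in>X. \<not> val_ge (\<xi> i) 0} \<subseteq> P" using x unfolding box_def padic_int_iff by auto
  then show "\<xi> \<in> QpX p X" using x P unfolding box_def QpX_iff by (auto intro: finite_subset)
qed

lemma box_empty_iff: "\<xi> \<in> box p X {} \<longleftrightarrow> \<xi> \<in> PiE X (\<lambda>_. padic p) \<and> vval_ge X \<xi> 0"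
  unfolding box_def vval_ge_def padic_int_iff by (auto simp: PiE_iff)

lemma QpX_in_box: "\<xi> \<in> QpX p X \<Longrightarrow> \<xi> \<in> box p X {j \<in> X. \<not> val_ge (\<xi> j) 0}"
  unfolding box_def QpX_def padic_int_iff by (auto simp: PiE_iff)

lemma box_vagree_zero:
  assumes "\<xi> \<in> box p X P" "\<xi>0 \<in> box p X P" "\<forall>j\<in>P. j \<in> X \<longrightarrow> agree 0 (\<xi> j) (\<xi>0 j)"
  shows "vagree X 0 \<xi> \<xi>0"
  using assms unfolding box_def vagree_def padic_int_iff val_ge_def agree_def by auto

lemma box_of_vagree_zero:
  assumes "\<eta> \<in> QpX p X" "\<eta>0 \<in> box p X Q" "vagree X 0 \<eta> \<eta>0"
  shows "\<eta> \<in> box p X Q"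
  using assms QpX_padic unfolding box_def QpX_def vagree_def padic_int_iff val_ge_def agree_def
  by auto

lemma tau_open_local_cylinder:
  assumes V: "tau_open p X V" and P: "finite P" "P \<subseteq> X" and x0: "\<xi>0 \<in> V" "\<xi>0 \<in> box p X P"
  obtains F n where "finite F"
    and "\<And>\<xi>. \<xi> \<in> box p X P \<Longrightarrow> \<forall>j\<in>F. j \<in> X \<longrightarrow> agree n (\<xi> j) (\<xi>0 j) \<Longrightarrow> \<xi> \<in> V"
proof -
  obtain W where W: "openin PT W" "V \<inter> box p X P = W \<inter> box p X P"
    using V P unfolding tau_open_def openin_subtopology by blast
  have "\<xi>0 \<in> W" using W(2) x0 by blast
  then obtain F n where F: "finite F"
    "\<forall>\<xi>\<in>PiE X (\<lambda>_. padic p). (\<forall>j\<in>F. j \<in> X \<longrightarrow> agree n (\<xi> j) (\<xi>0 j)) \<longrightarrow> \<xi> \<in> W"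
    using PT_cylinder_nbhd[OF W(1)] by blast
  show thesis
  proof (rule that[OF F(1)])
    fix \<xi> assume x: "\<xi> \<in> box p X P" and ag: "\<forall>j\<in>F. j \<in> X \<longrightarrow> agree n (\<xi> j) (\<xi>0 j)"
    have "\<xi> \<in> PiE X (\<lambda>_. padic p)" using x unfolding box_def by blast
    then have "\<xi> \<in> W" using F(2) ag by blast
    then show "\<xi> \<in> V" using W(2) x by blast
  qed
qed

lemma tau_openI:
  assumes "V \<subseteq> QpX p X"
    and "\<And>P \<xi>0. finite P \<Longrightarrow> P \<subseteq> X \<Longrightarrow> \<xi>0 \<in> V \<Longrightarrow> \<xi>0 \<in> box p X P \<Longrightarrow>
      \<exists>F n. finite F \<and> (\<forall>\<xi>\<in>box p X P. (\<forall>j\<in>F. j \<in> X \<longrightarrow> agree n (\<xi> j) (\<xi>0 j)) \<longrightarrow> \<xi> \<in> V)"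
  shows "tau_open p X V"
  unfolding tau_open_def
proof (intro conjI allI impI assms(1))
  fix P assume P: "finite P \<and> P \<subseteq> X"
  show "openin (subtopology PT (box p X P)) (V \<inter> box p X P)"
  proof (subst openin_subopen, intro ballI)
    fix \<xi>0 assume x0: "\<xi>0 \<in> V \<inter> box p X P"
    then obtain F n where F: "finite F"
      "\<forall>\<xi>\<in>box p X P. (\<forall>j\<in>F. j \<in> X \<longrightarrow> agree n (\<xi> j) (\<xi>0 j)) \<longrightarrow> \<xi> \<in> V"
      using assms(2)[of P \<xi>0] P by blast
    define W where "W = PiE X (\<lambda>i. if i \<in> F then {y \<in> padic p. agree n y (\<xi>0 i)} else padic p)"
    have "openin PT W" unfolding W_def by (rule openin_PT_cylinder[OF F(1)])
    moreover have "\<xi>0 \<in> W" using x0 unfolding W_def box_def by (auto simp: PiE_iff agree_def)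
    moreover have "W \<inter> box p X P \<subseteq> V"
    proof
      fix \<xi> assume "\<xi> \<in> W \<inter> box p X P"
      then have "\<xi> \<in> box p X P" "\<forall>j\<in>F. j \<in> X \<longrightarrow> agree n (\<xi> j) (\<xi>0 j)"
        unfolding W_def by (auto simp: PiE_iff)
      then show "\<xi> \<in> V" using F(2) by blast
    qed
    ultimately show "\<exists>T. openin (subtopology PT (box p X P)) T \<and> \<xi>0 \<in> T \<and> T \<subseteq> V \<inter> box p X P"
      using x0 by (intro exI[of _ "W \<inter> box p X P"]) (auto simp: openin_subtopology)
  qed
qed

lemma tau_open_cylinder:
  assumes "finite F"
  shows "tau_open p X {\<eta> \<in> QpX p X. \<forall>j\<in>F. j \<in> X \<longrightarrow> agree n (\<eta> j) (a j)}"
proof (rule tau_openI)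
  fix P \<xi>0 assume P: "finite P" "P \<subseteq> X"
    and x0: "\<xi>0 \<in> {\<eta> \<in> QpX p X. \<forall>j\<in>F. j \<in> X \<longrightarrow> agree n (\<eta> j) (a j)}" "\<xi>0 \<in> box p X P"
  have "\<xi> \<in> {\<eta> \<in> QpX p X. \<forall>j\<in>F. j \<in> X \<longrightarrow> agree n (\<eta> j) (a j)}"
    if "\<xi> \<in> box p X P" "\<forall>j\<in>F. j \<in> X \<longrightarrow> agree n (\<xi> j) (\<xi>0 j)" for \<xi>
    using that x0(1) box_subset_QpX[OF P(1)] unfolding agree_def by auto
  then show "\<exists>F' n'. finite F' \<and> (\<forall>\<xi>\<in>box p X P. (\<forall>j\<in>F'. j \<in> X \<longrightarrow> agree n' (\<xi> j) (\<xi>0 j)) \<longrightarrow>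
      \<xi> \<in> {\<eta> \<in> QpX p X. \<forall>j\<in>F. j \<in> X \<longrightarrow> agree n (\<eta> j) (a j)})"
    using assms by blast
qed blast

lemma tau_open_box_empty: "tau_open p X (box p X {})"
proof (rule tau_openI)
  show "box p X {} \<subseteq> QpX p X" by (rule box_subset_QpX) simp
  fix P \<xi>0 assume "finite P" "P \<subseteq> X" "\<xi>0 \<in> box p X {}" "\<xi>0 \<in> box p X P"
  then have "\<xi> \<in> box p X {}" if "\<xi> \<in> box p X P" "\<forall>j\<in>P. j \<in> X \<longrightarrow> agree 0 (\<xi> j) (\<xi>0 j)" for \<xi>
    using that unfolding box_def padic_int_iff val_ge_def agree_def by auto
  then show "\<exists>F n. finite F \<and> (\<forall>\<xi>\<in>box p X P. (\<forall>j\<in>F. j \<in> X \<longrightarrow> agree n (\<xi> j) (\<xi>0 j)) \<longrightarrow>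
      \<xi> \<in> box p X {})"
    using \<open>finite P\<close> by blast
qed

lemma op_bound_from_level:
  assumes T: "T \<in> Bops p X" and a: "a \<ge> 0"
    and h: "\<And>\<xi>. \<xi> \<in> QpX p X \<Longrightarrow> vval_ge X \<xi> a \<Longrightarrow> vval_ge X (T \<xi>) b"
  shows "op_bound p X T (a - b)"
  unfolding op_bound_def
proof (intro ballI allI impI)
  fix \<xi> n assume x: "\<xi> \<in> QpX p X" and l: "vval_ge X \<xi> n"
  show "vval_ge X (T \<xi>) (n - (a - b))"
  proof (cases "n \<le> a")
    case True
    define j where "j = a - n"
    have j: "j \<ge> 0" using True unfolding j_def by simp
    have x': "vshift X j \<xi> \<in> QpX p X" using vshift_QpX[OF x] j by simp
    have "vval_ge X (vshift X j \<xi>) a" using vval_ge_vshift[where j=j and \<xi>=\<xi> and n=n] l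
      unfolding j_def by simp
    then have "vval_ge X (T (vshift X j \<xi>)) b" using h x' by blast
    then have "vval_ge X (vshift X j (T \<xi>)) ((b - j) + j)" using Bops_shift[OF T j x] by simp
    then have "vval_ge X (T \<xi>) (b - j)" using vval_ge_vshift by blast
    then show ?thesis unfolding j_def by (simp add: algebra_simps)
  next
    case False
    define j where "j = n - a"
    have j: "j > 0" using False unfolding j_def by simp
    have lj: "vval_ge X \<xi> (- (- j))" using l vval_ge_mono[where m=j and n=n] a unfolding j_def
      by simp
    have x': "vshift X (- j) \<xi> \<in> QpX p X" using vshift_QpX[OF x] lj by blast
    have "vval_ge X (vshift X (- j) \<xi>) (n + - j)" using vval_ge_vshift l by blast
    then have "vval_ge X (T (vshift X (- j) \<xi>)) b" using h x' unfolding j_def by simp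
    moreover have "\<xi> = vshift X j (vshift X (- j) \<xi>)"
      using vshift_vshift[where a=j and b="- j" and \<xi>=\<xi>] vshift_0[OF x] by simp
    then have "T \<xi> = vshift X j (T (vshift X (- j) \<xi>))" using Bops_shift[OF T _ x', of j] j by simp
    ultimately have "vval_ge X (T \<xi>) (b + j)"
      using vval_ge_vshift[where j=j and \<xi>="T (vshift X (- j) \<xi>)" and n=b] by simp
    then show ?thesis unfolding j_def by (simp add: algebra_simps)
  qed
qed

lemma Bops_op_bound_ex:
  assumes T: "T \<in> Bops p X"
  shows "\<exists>m. op_bound p X T m"
proof -
  have V: "tau_open p X {\<xi> \<in> QpX p X. T \<xi> \<in> box p X {}}"
    using Bops_tau[OF T] tau_open_box_empty unfolding tau_continuous_def by blast
  have z: "vzero X \<in> box p X {}"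
    using vzero_QpX unfolding box_empty_iff QpX_def vval_ge_iff_vagree_zero
      by (simp add: vagree_def agree_def)
  have zV: "vzero X \<in> {\<xi> \<in> QpX p X. T \<xi> \<in> box p X {}}"
    using Bops_zero[OF T] z vzero_QpX by simp
  obtain F n where F: "\<And>\<xi>. \<xi> \<in> box p X {} \<Longrightarrow>
      \<forall>j\<in>F. j \<in> X \<longrightarrow> agree n (\<xi> j) (vzero X j) \<Longrightarrow> \<xi> \<in> {\<xi> \<in> QpX p X. T \<xi> \<in> box p X {}}"
    using tau_open_local_cylinder[OF V finite.emptyI empty_subsetI zV z] by blast
  have "op_bound p X T (max n 0 - 0)"
  proof (rule op_bound_from_level[OF T])
    fix \<xi> assume x: "\<xi> \<in> QpX p X" and l: "vval_ge X \<xi> (max n 0)"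
    have "\<xi> \<in> box p X {}"
      using x l vval_ge_mono[of 0 "max n 0"] unfolding box_empty_iff QpX_def by auto
    moreover have "\<forall>j\<in>F. j \<in> X \<longrightarrow> agree n (\<xi> j) (vzero X j)"
      using l vval_ge_mono[of n "max n 0"] unfolding vval_ge_iff_vagree_zero vagree_def by auto
    ultimately show "vval_ge X (T \<xi>) 0" using F box_empty_iff by blast
  qed simp
  then show ?thesis by blast
qed

end

section \<open>The operator norm\<close>

context padic_space
begin

lemma vnorm_le_1_iff: "\<xi> \<in> QpX p X \<Longrightarrow> vnorm p X \<xi> \<le> 1 \<longleftrightarrow> vval_ge X \<xi> 0"
  using vnorm_le_iff[where \<xi>=\<xi> and n=0] by simp

lemma op_norm_le_ppow:
  assumes "\<And>\<xi>. \<xi> \<in> QpX p X \<Longrightarrow> T \<xi> \<in> QpX p X"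
    and "\<And>\<xi>. \<xi> \<in> QpX p X \<Longrightarrow> vval_ge X \<xi> 0 \<Longrightarrow> vval_ge X (T \<xi>) (- m)"
  shows "op_norm p X T \<le> real p powi m"
  unfolding op_norm_def
proof (rule cSup_least)
  fix y assume "y \<in> insert 0 {vnorm p X (T \<xi>) | \<xi>. \<xi> \<in> QpX p X \<and> vnorm p X \<xi> \<le> 1}"
  then show "y \<le> real p powi m"
  proof
    assume "y = 0" then show ?thesis by simp
  next
    assume "y \<in> {vnorm p X (T \<xi>) | \<xi>. \<xi> \<in> QpX p X \<and> vnorm p X \<xi> \<le> 1}"
    then obtain \<xi> where x: "\<xi> \<in> QpX p X" "vnorm p X \<xi> \<le> 1" "y = vnorm p X (T \<xi>)" by blast
    then have "vval_ge X (T \<xi>) (- m)" using assms(2) vnorm_le_1_iff by blast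
    then show ?thesis using vnorm_le_iff[OF assms(1)[OF x(1)], of "- m"] x by simp
  qed
qed simp

lemma op_norm_le_of_op_bound:
  assumes "\<And>\<xi>. \<xi> \<in> QpX p X \<Longrightarrow> T \<xi> \<in> QpX p X" "op_bound p X T m"
  shows "op_norm p X T \<le> real p powi m"
proof (rule op_norm_le_ppow[OF assms(1)])
  fix \<xi> assume "\<xi> \<in> QpX p X" "vval_ge X \<xi> 0"
  then show "vval_ge X (T \<xi>) (- m)" using assms(2)[unfolded op_bound_def, rule_format, of \<xi> 0]
    by simp
qed

lemma op_norm_set_bdd_above:
  assumes TQ: "\<And>\<xi>. \<xi> \<in> QpX p X \<Longrightarrow> T \<xi> \<in> QpX p X"
    and Tm: "\<And>\<xi>. \<xi> \<in> QpX p X \<Longrightarrow> vval_ge X \<xi> 0 \<Longrightarrow> vval_ge X (T \<xi>) (- m)"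
  shows "bdd_above (insert 0 {vnorm p X (T \<xi>) | \<xi>. \<xi> \<in> QpX p X \<and> vnorm p X \<xi> \<le> 1})"
proof (rule bdd_aboveI[where M = "real p powi m"])
  fix y assume "y \<in> insert 0 {vnorm p X (T \<xi>) | \<xi>. \<xi> \<in> QpX p X \<and> vnorm p X \<xi> \<le> 1}"
  then consider "y = 0" | \<eta> where "\<eta> \<in> QpX p X" "vnorm p X \<eta> \<le> 1" "y = vnorm p X (T \<eta>)"
    by blast
  then show "y \<le> real p powi m"
  proof cases
    case 1 then show ?thesis using p_gt_1 by simp
  next
    case 2
    then have "vval_ge X (T \<eta>) (- m)" using Tm vnorm_le_1_iff by blast
    then show ?thesis using vnorm_le_iff[OF TQ[OF 2(1)], of "- m"] 2 by simp
  qed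
qed

lemma op_norm_nonneg:
  assumes "\<And>\<xi>. \<xi> \<in> QpX p X \<Longrightarrow> T \<xi> \<in> QpX p X"
    and "\<And>\<xi>. \<xi> \<in> QpX p X \<Longrightarrow> vval_ge X \<xi> 0 \<Longrightarrow> vval_ge X (T \<xi>) (- m)"
  shows "0 \<le> op_norm p X T"
  unfolding op_norm_def by (rule cSup_upper[OF _ op_norm_set_bdd_above[OF assms]]) simp

lemma vnorm_le_op_norm:
  assumes T: "T \<in> Bops p X" and x: "\<xi> \<in> QpX p X" "vnorm p X \<xi> \<le> 1"
  shows "vnorm p X (T \<xi>) \<le> op_norm p X T"
proof -
  obtain m where m: "op_bound p X T m" using Bops_op_bound_ex[OF T] by blast
  have "vval_ge X (T \<eta>) (- m)" if "\<eta> \<in> QpX p X" "vval_ge X \<eta> 0" for \<eta>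
    using m[unfolded op_bound_def, rule_format, OF that] by simp
  note bdd = op_norm_set_bdd_above[OF Bops_QpX[OF T] this]
  have "vnorm p X (T \<xi>) \<in> insert 0 {vnorm p X (T \<xi>) | \<xi>. \<xi> \<in> QpX p X \<and> vnorm p X \<xi> \<le> 1}"
    using x by blast
  then show ?thesis unfolding op_norm_def by (rule cSup_upper[OF _ bdd])
qed

lemma op_bound_of_op_norm_less:
  assumes T: "T \<in> Bops p X" and lt: "op_norm p X T < real p powi m"
  shows "op_bound p X T (m - 1)"
  unfolding op_bound_def
proof (intro ballI allI impI)
  fix \<xi> n assume x: "\<xi> \<in> QpX p X" and l: "vval_ge X \<xi> n"
  define \<xi>' where "\<xi>' = vshift X (- n) \<xi>"
  have x': "\<xi>' \<in> QpX p X" unfolding \<xi>'_def by (rule vshift_QpX[OF x]) (use l in simp)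
  have l': "vval_ge X \<xi>' 0" using vval_ge_vshift[where j="- n" and \<xi>=\<xi> and n=n] l unfolding \<xi>'_def
    by simp
  have "vnorm p X (T \<xi>') \<le> op_norm p X T"
    using vnorm_le_op_norm[OF T x'] x' l' vnorm_le_1_iff by simp
  then have "vnorm p X (T \<xi>') < real p powi (- (1 - m) + 1)" using lt by simp
  then have t': "vval_ge X (T \<xi>') (1 - m)"
    using vval_ge_of_vnorm_less[OF Bops_QpX[OF T x'], where n = "1 - m"] by simp
  show "vval_ge X (T \<xi>) (n - (m - 1))"
  proof (cases "n \<ge> 0")
    case True
    have "\<xi> = vshift X n \<xi>'" unfolding \<xi>'_def vshift_vshift using vshift_0[OF x] by simp
    then have "T \<xi> = vshift X n (T \<xi>')" using Bops_shift[OF T True x'] by simp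
    then show ?thesis using vval_ge_vshift[where j=n and \<xi>="T \<xi>'" and n="1 - m"] t'
      by (simp add: algebra_simps)
  next
    case False
    have "T \<xi>' = vshift X (- n) (T \<xi>)" unfolding \<xi>'_def using Bops_shift[OF T _ x] False by simp
    then show ?thesis using vval_ge_vshift[where j="- n" and \<xi>="T \<xi>" and n="n - (m - 1)"] t'
      by (simp add: algebra_simps)
  qed
qed

lemma op_bound_all_eq_zero:
  assumes T: "T \<in> Bops p X" and all: "\<And>m. op_bound p X T m"
  shows "T = op_zero p X"
proof (rule extensionalityI[OF Bops_ext[OF T]])
  show "op_zero p X \<in> extensional (QpX p X)" unfolding op_zero_def by simp
  fix \<xi> assume x: "\<xi> \<in> QpX p X"
  obtain n1 where n1: "vval_ge X \<xi> n1" using QpX_vval_ge_ex[OF x] by blast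
  have "vagree X n (T \<xi>) (vzero X)" for n
    using all[of "n1 - n"] x n1 unfolding op_bound_def vval_ge_iff_vagree_zero by fastforce
  then show "T \<xi> = op_zero p X \<xi>"
    using QpX_eqI[OF Bops_QpX[OF T x] vzero_QpX] x unfolding op_zero_def by simp
qed

lemma op_bound_sharp_ex:
  assumes T: "T \<in> Bops p X" and nz: "T \<noteq> op_zero p X"
  shows "\<exists>a. op_bound p X T a \<and> \<not> op_bound p X T (a - 1)"
proof (rule ccontr)
  assume "\<not> ?thesis"
  then have step: "op_bound p X T a \<Longrightarrow> op_bound p X T (a - 1)" for a by blast
  obtain m0 where b0: "op_bound p X T m0" using Bops_op_bound_ex[OF T] by blast
  have down: "op_bound p X T (m0 - int k)" for k
    by (induction k) (use b0 step in \<open>simp_all add: diff_add_eq_diff_diff_swap\<close>)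
  have "op_bound p X T m" for m
    using down[of "nat (m0 - m)"] op_bound_mono[of T "m0 - int (nat (m0 - m))" m] by simp
  then show False using op_bound_all_eq_zero[OF T] nz by blast
qed

lemma op_norm_eq_ppow:
  assumes T: "T \<in> Bops p X" and b: "op_bound p X T a" and nb: "\<not> op_bound p X T (a - 1)"
  shows "op_norm p X T = real p powi a"
proof -
  have "op_norm p X T \<le> real p powi a" using op_norm_le_of_op_bound[OF _ b] T by simp
  moreover have "\<not> op_norm p X T < real p powi a" using op_bound_of_op_norm_less[OF T] nb by blast
  ultimately show ?thesis by simp
qed

lemma idempotent_op_norm:
  assumes e: "e \<in> Bops p X" and idem: "op_comp p X e e = e" and nz: "e \<noteq> op_zero p X"
  obtains a where "0 \<le> a" "op_bound p X e a" "op_norm p X e = real p powi a"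
proof -
  obtain a where a: "op_bound p X e a" "\<not> op_bound p X e (a - 1)"
    using op_bound_sharp_ex[OF e nz] by blast
  have "0 \<le> a"
  proof (rule ccontr)
    assume "\<not> 0 \<le> a"
    have "op_bound p X e (a + a)" using op_bound_comp[OF e e a(1) a(1)] idem by simp
    then have "op_bound p X e (a - 1)" by (rule op_bound_mono) (use \<open>\<not> 0 \<le> a\<close> in simp)
    then show False using a(2) by blast
  qed
  then show thesis using that a(1) op_norm_eq_ppow[OF e a] by blast
qed


lemma idempotent_perturbation_op_bound:
  assumes e: "e \<in> Bops p X" and f: "f \<in> Bops p X"
    and idem: "op_comp p X e e = e" and nz: "e \<noteq> op_zero p X"
  defines "d \<equiv> op_diff p X e f"
  assumes d: "d \<in> Bops p X" and close: "op_norm p X d < 1 / op_norm p X e"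
  shows "op_bound p X (op_diff p X (op_comp p X e d) (op_comp p X d f)) (-1)"
proof -
  obtain a where a: "0 \<le> a" "op_bound p X e a" "op_norm p X e = real p powi a"
    using idempotent_op_norm[OF e idem nz] .
  have "op_norm p X d < real p powi (- a)"
    using close a(3) by (simp add: power_int_minus inverse_eq_divide)
  then have bd: "op_bound p X d (- a - 1)" using op_bound_of_op_norm_less[OF d] by simp
  have bf: "op_bound p X f a"
    using op_bound_of_diff[OF e f a(2)] op_bound_mono[OF bd] a(1) unfolding d_def by simp
  have "op_bound p X (op_comp p X e d) (-1)" using op_bound_comp[OF e d a(2) bd] by simp
  moreover have "op_bound p X (op_comp p X d f) (-1)" using op_bound_comp[OF d f bd bf] by simp
  ultimately show ?thesis using e f d by (intro op_bound_diff) auto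
qed
end

section \<open>The Neumann series\<close>

definition vlim :: "'x set \<Rightarrow> (nat \<Rightarrow> 'x vec) \<Rightarrow> 'x vec" where
  "vlim X \<sigma> = (\<lambda>i\<in>X. \<lambda>k. \<sigma> (SOME N. \<forall>M\<ge>N. vagree X (k + 1) (\<sigma> M) (\<sigma> N)) i k)"

definition vcauchy :: "'x set \<Rightarrow> (nat \<Rightarrow> 'x vec) \<Rightarrow> bool" where
  "vcauchy X \<sigma> \<longleftrightarrow> (\<forall>n. \<exists>N. \<forall>M\<ge>N. vagree X n (\<sigma> M) (\<sigma> N))"

context padic_space
begin

lemma vlim_agree:
  assumes c: "vcauchy X \<sigma>" and N: "\<forall>M\<ge>N. vagree X n (\<sigma> M) (\<sigma> N)"
  shows "vagree X n (vlim X \<sigma>) (\<sigma> N)"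
  unfolding vagree_def agree_def
proof (intro ballI allI impI)
  fix i k assume i: "i \<in> X" and k: "k < n"
  define Nk where "Nk = (SOME N. \<forall>M\<ge>N. vagree X (k + 1) (\<sigma> M) (\<sigma> N))"
  have "\<exists>N. \<forall>M\<ge>N. vagree X (k + 1) (\<sigma> M) (\<sigma> N)" using c unfolding vcauchy_def by blast
  then have Nk: "\<forall>M\<ge>Nk. vagree X (k + 1) (\<sigma> M) (\<sigma> Nk)"
    unfolding Nk_def by (rule someI_ex)
  define M where "M = max N Nk"
  have "\<sigma> M i k = \<sigma> Nk i k" using Nk[rule_format, of M] i unfolding M_def vagree_def agree_def
    by auto
  moreover have "\<sigma> M i k = \<sigma> N i k" using N[rule_format, of M] i k
    unfolding M_def vagree_def agree_def by auto
  ultimately show "vlim X \<sigma> i k = \<sigma> N i k" unfolding vlim_def Nk_def using i by simp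
qed

lemma vlim_QpX:
  assumes c: "vcauchy X \<sigma>" and q: "\<And>N. \<sigma> N \<in> QpX p X"
  shows "vlim X \<sigma> \<in> QpX p X"
proof -
  obtain N0 where N0: "\<forall>M\<ge>N0. vagree X 0 (\<sigma> M) (\<sigma> N0)" using c unfolding vcauchy_def by blast
  have a0: "vagree X 0 (vlim X \<sigma>) (\<sigma> N0)" by (rule vlim_agree[OF c N0])
  have pad: "vlim X \<sigma> i \<in> padic p" if i: "i \<in> X" for i
  proof -
    have dig: "vlim X \<sigma> i k < p" for k
      using QpX_padic[OF q i] padic_digit_less unfolding vlim_def using i by auto
    obtain L where L: "val_ge (\<sigma> N0 i) L" using padic_val_ge_ex[OF QpX_padic[OF q i]] by blast
    have "\<forall>k<min L 0. vlim X \<sigma> i k = 0"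
    proof (intro allI impI)
      fix k assume "k < min L 0"
      then show "vlim X \<sigma> i k = 0" using a0 L i unfolding vagree_def agree_def val_ge_def by auto
    qed
    then show ?thesis unfolding padic_def using dig by blast
  qed
  have pie: "vlim X \<sigma> \<in> PiE X (\<lambda>_. padic p)" using pad unfolding vlim_def by (auto simp: PiE_iff)
  have "{i\<in>X. \<not> val_ge (vlim X \<sigma> i) 0} = {i\<in>X. \<not> val_ge (\<sigma> N0 i) 0}"
    using a0 unfolding vagree_def agree_def val_ge_def by auto
  then show ?thesis using q[of N0] pie unfolding QpX_iff by simp
qed

lemma approx_continuous_on_box:
  assumes S: "\<And>N. S N \<in> Bops p X"
    and appr: "\<And>k. \<exists>N. \<forall>\<xi>\<in>QpX p X. \<forall>n. vval_ge X \<xi> n \<longrightarrow> vagree X (n + k) (S N \<xi>) (h \<xi>)"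
    and P: "finite P" "P \<subseteq> X" and x0: "\<xi>0 \<in> box p X P" and F: "finite F"
  obtains F' n' where "finite F'" "P \<subseteq> F'" "0 \<le> n'"
    and "\<And>\<xi>. \<xi> \<in> box p X P \<Longrightarrow> \<forall>j\<in>F'. j \<in> X \<longrightarrow> agree n' (\<xi> j) (\<xi>0 j) \<Longrightarrow>
      \<forall>j\<in>F. j \<in> X \<longrightarrow> agree n1 (h \<xi> j) (h \<xi>0 j)"
proof -
  have x0Q: "\<xi>0 \<in> QpX p X" using x0 box_subset_QpX P(1) by blast
  obtain n0 where n0: "n0 \<le> 0" "vval_ge X \<xi>0 n0" using QpX_vval_ge_ex[OF x0Q] by blast
  obtain N where N: "\<forall>\<xi>\<in>QpX p X. \<forall>n. vval_ge X \<xi> n \<longrightarrow> vagree X (n + (n1 - n0)) (S N \<xi>) (h \<xi>)"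
    using appr by blast
  let ?C = "{\<eta> \<in> QpX p X. \<forall>j\<in>F. j \<in> X \<longrightarrow> agree n1 (\<eta> j) (S N \<xi>0 j)}"
  have SN_open: "tau_open p X {\<xi> \<in> QpX p X. S N \<xi> \<in> ?C}"
    using Bops_tau[OF S] tau_open_cylinder[OF F] unfolding tau_continuous_def by blast
  have x0C: "\<xi>0 \<in> {\<xi> \<in> QpX p X. S N \<xi> \<in> ?C}"
    using x0Q Bops_QpX[OF S x0Q] by (simp add: agree_def)
  obtain F' n' where F': "finite F'"
    "\<And>\<xi>. \<xi> \<in> box p X P \<Longrightarrow> \<forall>j\<in>F'. j \<in> X \<longrightarrow> agree n' (\<xi> j) (\<xi>0 j) \<Longrightarrow>
      \<xi> \<in> {\<xi> \<in> QpX p X. S N \<xi> \<in> ?C}"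
    using tau_open_local_cylinder[OF SN_open P x0C x0] by blast
  show thesis
  proof (rule that[of "F' \<union> P" "max n' 0"])
    show "finite (F' \<union> P)" "P \<subseteq> F' \<union> P" "0 \<le> max n' 0" using F'(1) P(1) by auto
    fix \<xi> assume xB: "\<xi> \<in> box p X P"
      and ag: "\<forall>j\<in>F' \<union> P. j \<in> X \<longrightarrow> agree (max n' 0) (\<xi> j) (\<xi>0 j)"
    have xQ: "\<xi> \<in> QpX p X" using xB box_subset_QpX P(1) by blast
    have "vagree X 0 \<xi> \<xi>0" using box_vagree_zero[OF xB x0] ag agree_mono[of 0 "max n' 0"] by simp
    then have "vval_ge X \<xi> n0"
      using vagree_mono[OF n0(1)] n0(2) vagree_trans unfolding vval_ge_iff_vagree_zero by blast
    then have "vagree X n1 (S N \<xi>) (h \<xi>)" using N xQ by fastforce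
    moreover have "vagree X n1 (S N \<xi>0) (h \<xi>0)" using N x0Q n0(2) by fastforce
    moreover have "\<forall>j\<in>F. j \<in> X \<longrightarrow> agree n1 (S N \<xi> j) (S N \<xi>0 j)"
      using F'(2)[OF xB] ag agree_mono[of n' "max n' 0"] by simp
    ultimately show "\<forall>j\<in>F. j \<in> X \<longrightarrow> agree n1 (h \<xi> j) (h \<xi>0 j)"
      by (auto simp: vagree_def agree_def)
  qed
qed

lemma tau_continuous_of_approx:
  assumes hQ: "\<And>\<xi>. \<xi> \<in> QpX p X \<Longrightarrow> h \<xi> \<in> QpX p X"
    and hadd: "\<And>\<xi> \<eta>. \<xi> \<in> QpX p X \<Longrightarrow> \<eta> \<in> QpX p X \<Longrightarrow> h (vadd p X \<xi> \<eta>) = vadd p X (h \<xi>) (h \<eta>)"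
    and hneg: "\<And>\<xi>. \<xi> \<in> QpX p X \<Longrightarrow> h (vneg p X \<xi>) = vneg p X (h \<xi>)"
    and hb: "op_bound p X h 0"
    and S: "\<And>N. S N \<in> Bops p X"
    and appr: "\<And>k. \<exists>N. \<forall>\<xi>\<in>QpX p X. \<forall>n. vval_ge X \<xi> n \<longrightarrow> vagree X (n + k) (S N \<xi>) (h \<xi>)"
  shows "tau_continuous p X h"
  unfolding tau_continuous_def
proof (intro allI impI)
  fix U assume U: "tau_open p X U"
  show "tau_open p X {\<xi> \<in> QpX p X. h \<xi> \<in> U}"
  proof (rule tau_openI)
    fix P \<xi>0 assume P: "finite P" "P \<subseteq> X"
      and x0: "\<xi>0 \<in> {\<xi> \<in> QpX p X. h \<xi> \<in> U}" "\<xi>0 \<in> box p X P"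
    define Q where "Q = {j \<in> X. \<not> val_ge (h \<xi>0 j) 0}"
    have Q: "finite Q" "Q \<subseteq> X" "h \<xi>0 \<in> box p X Q"
      using hQ x0(1) QpX_in_box unfolding Q_def QpX_iff by auto
    obtain F n1 where F: "finite F"
      "\<And>\<eta>. \<eta> \<in> box p X Q \<Longrightarrow> \<forall>j\<in>F. j \<in> X \<longrightarrow> agree n1 (\<eta> j) (h \<xi>0 j) \<Longrightarrow> \<eta> \<in> U"
      using tau_open_local_cylinder[OF U Q(1,2) _ Q(3)] x0(1) by blast
    obtain F' n' where F': "finite F'" "P \<subseteq> F'" "0 \<le> n'"
      "\<And>\<xi>. \<xi> \<in> box p X P \<Longrightarrow> \<forall>j\<in>F'. j \<in> X \<longrightarrow> agree n' (\<xi> j) (\<xi>0 j) \<Longrightarrow>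
        \<forall>j\<in>F. j \<in> X \<longrightarrow> agree n1 (h \<xi> j) (h \<xi>0 j)"
      using approx_continuous_on_box[OF S appr P x0(2) F(1)] by blast
    have "\<xi> \<in> {\<xi> \<in> QpX p X. h \<xi> \<in> U}"
      if xB: "\<xi> \<in> box p X P" and ag: "\<forall>j\<in>F'. j \<in> X \<longrightarrow> agree n' (\<xi> j) (\<xi>0 j)" for \<xi>
    proof -
      have xQ: "\<xi> \<in> QpX p X" using xB box_subset_QpX P(1) by blast
      have "vagree X 0 \<xi> \<xi>0"
        using box_vagree_zero[OF xB x0(2)] ag F'(2,3) agree_mono[of 0 n'] by auto
      then have "h \<xi> \<in> box p X Q"
        using box_of_vagree_zero[OF hQ[OF xQ] Q(3)] op_bound_vagree_additive[OF hQ hadd hneg hb xQ]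
          x0(1) by simp
      then show ?thesis using F(2) F'(4)[OF xB ag] xQ by blast
    qed
    then show "\<exists>F n. finite F \<and> (\<forall>\<xi>\<in>box p X P. (\<forall>j\<in>F. j \<in> X \<longrightarrow> agree n (\<xi> j) (\<xi>0 j)) \<longrightarrow>
        \<xi> \<in> {\<xi> \<in> QpX p X. h \<xi> \<in> U})"
      using F'(1) by blast
  qed blast
qed

end

primrec neumann_sum :: "nat \<Rightarrow> 'x set \<Rightarrow> 'x oper \<Rightarrow> nat \<Rightarrow> 'x oper" where
  "neumann_sum p X w 0 = op_id p X"
| "neumann_sum p X w (Suc N) = op_add p X (op_id p X) (op_comp p X w (neumann_sum p X w N))"

definition neumann_limit :: "nat \<Rightarrow> 'x set \<Rightarrow> 'x oper \<Rightarrow> 'x oper" where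
  "neumann_limit p X w = (\<lambda>\<xi>\<in>QpX p X. vlim X (\<lambda>N. neumann_sum p X w N \<xi>))"

locale neumann_series = padic_space p X for p and X :: "'x set" +
  fixes w :: "'x oper"
  assumes w: "w \<in> Bops p X" and w_bound: "op_bound p X w (-1)"
    and sum_Bops: "\<And>N. neumann_sum p X w N \<in> Bops p X"
begin

abbreviation "S \<equiv> neumann_sum p X w"

abbreviation "H \<equiv> neumann_limit p X w"

lemma sum_QpX: "\<xi> \<in> QpX p X \<Longrightarrow> S N \<xi> \<in> QpX p X" using Bops_QpX[OF sum_Bops] .

lemma w_QpX: "\<xi> \<in> QpX p X \<Longrightarrow> w \<xi> \<in> QpX p X" using Bops_QpX[OF w] .

lemma sum_Suc: "\<xi> \<in> QpX p X \<Longrightarrow> S (Suc N) \<xi> = vadd p X \<xi> (w (S N \<xi>))"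
  using sum_QpX by (simp add: op_add_apply op_id_apply op_comp_apply)

lemma sum_0: "\<xi> \<in> QpX p X \<Longrightarrow> S 0 \<xi> = \<xi>"
  by (simp add: op_id_apply)

lemma w_vval_ge: "\<xi> \<in> QpX p X \<Longrightarrow> vval_ge X \<xi> n \<Longrightarrow> vval_ge X (w \<xi>) (n + 1)"
  using w_bound unfolding op_bound_def by fastforce

lemma sum_Suc_vagree:
  assumes x: "\<xi> \<in> QpX p X" and l: "vval_ge X \<xi> n"
  shows "vagree X (n + int N + 1) (S (Suc N) \<xi>) (S N \<xi>)"
proof (induction N)
  case 0
  have "vagree X (n + 1) (w \<xi>) (vzero X)" using w_vval_ge[OF x l] vval_ge_iff_vagree_zero by blast
  then have "vagree X (n + 1) (vadd p X \<xi> (w \<xi>)) (vadd p X \<xi> (vzero X))"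
    by (intro vagree_add[OF x w_QpX[OF x] x vzero_QpX]) simp_all
  then show ?case using sum_Suc[OF x, of 0] sum_0[OF x] vadd_zero[OF x] by simp
next
  case (Suc N)
  have "vagree X (n + int N + 1 - -1) (w (S (Suc N) \<xi>)) (w (S N \<xi>))"
    by (rule op_bound_vagree[OF w w_bound sum_QpX[OF x] sum_QpX[OF x] Suc])
  then have "vagree X (n + int (Suc N) + 1) (vadd p X \<xi> (w (S (Suc N) \<xi>))) (vadd p X \<xi> (w (S N \<xi>)))"
    by (intro vagree_add[OF x w_QpX[OF sum_QpX[OF x]] x w_QpX[OF sum_QpX[OF x]]])
      (simp_all add: algebra_simps)
  then show ?case using sum_Suc[OF x, of "Suc N"] sum_Suc[OF x, of N] by simp
qed

lemma sum_vagree: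
  assumes x: "\<xi> \<in> QpX p X" and l: "vval_ge X \<xi> n" and M: "M \<ge> N"
  shows "vagree X (n + int N + 1) (S M \<xi>) (S N \<xi>)"
proof -
  have "vagree X (n + int N + 1) (S (N + k) \<xi>) (S N \<xi>)" for k
  proof (induction k)
    case 0 then show ?case by simp
  next
    case (Suc k)
    have "vagree X (n + int (N + k) + 1) (S (Suc (N + k)) \<xi>) (S (N + k) \<xi>)"
      by (rule sum_Suc_vagree[OF x l])
    then have "vagree X (n + int N + 1) (S (Suc (N + k)) \<xi>) (S (N + k) \<xi>)"
      by (rule vagree_mono[rotated]) simp
    then show ?case using Suc vagree_trans by simp
  qed
  from this[of "M - N"] show ?thesis using M by simp
qed

lemma sum_vcauchy: "\<xi> \<in> QpX p X \<Longrightarrow> vcauchy X (\<lambda>N. S N \<xi>)"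
proof -
  assume x: "\<xi> \<in> QpX p X"
  obtain n where l: "vval_ge X \<xi> n" using QpX_vval_ge_ex[OF x] by blast
  show ?thesis unfolding vcauchy_def
  proof
    fix L
    show "\<exists>N. \<forall>M\<ge>N. vagree X L (S M \<xi>) (S N \<xi>)"
    proof (intro exI allI impI)
      fix M assume "M \<ge> nat (L - n)"
      then have "vagree X (n + int (nat (L - n)) + 1) (S M \<xi>) (S (nat (L - n)) \<xi>)"
        by (rule sum_vagree[OF x l])
      then show "vagree X L (S M \<xi>) (S (nat (L - n)) \<xi>)" by (rule vagree_mono[rotated]) simp
    qed
  qed
qed

lemma limit_apply: "\<xi> \<in> QpX p X \<Longrightarrow> H \<xi> = vlim X (\<lambda>N. S N \<xi>)"
  unfolding neumann_limit_def by simp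

lemma limit_QpX: "\<xi> \<in> QpX p X \<Longrightarrow> H \<xi> \<in> QpX p X"
  using limit_apply vlim_QpX[OF sum_vcauchy sum_QpX] by simp

lemma limit_vagree_sum:
  assumes x: "\<xi> \<in> QpX p X" and l: "vval_ge X \<xi> n"
  shows "vagree X (n + int N + 1) (H \<xi>) (S N \<xi>)"
  unfolding limit_apply[OF x] by (rule vlim_agree[OF sum_vcauchy[OF x]])
    (use sum_vagree[OF x l] in blast)

lemma common_vval_ge:
  assumes "\<xi> \<in> QpX p X" "\<eta> \<in> QpX p X" "\<zeta> \<in> QpX p X"
  shows "\<exists>m. vval_ge X \<xi> m \<and> vval_ge X \<eta> m \<and> vval_ge X \<zeta> m"
proof -
  obtain a b c where "vval_ge X \<xi> a" "vval_ge X \<eta> b" "vval_ge X \<zeta> c"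
    using QpX_vval_ge_ex assms by metis
  then have "vval_ge X \<xi> (min a (min b c))" "vval_ge X \<eta> (min a (min b c))"
    "vval_ge X \<zeta> (min a (min b c))"
    by (auto elim: vval_ge_mono[rotated])
  then show ?thesis by blast
qed

lemma eq_if_vagree_levels:
  assumes "\<xi> \<in> QpX p X" "\<eta> \<in> QpX p X"
    and "\<And>N. vagree X (m + int N + 1) \<xi> \<eta>"
  shows "\<xi> = \<eta>"
proof (rule QpX_eqI[OF assms(1,2)])
  fix L
  have "vagree X (m + int (nat (L - m)) + 1) \<xi> \<eta>" by (rule assms(3))
  then show "vagree X L \<xi> \<eta>" by (rule vagree_mono[rotated]) simp
qed

lemma limit_vadd:
  assumes x: "\<xi> \<in> QpX p X" and y: "\<eta> \<in> QpX p X"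
  shows "H (vadd p X \<xi> \<eta>) = vadd p X (H \<xi>) (H \<eta>)"
proof -
  have xy: "vadd p X \<xi> \<eta> \<in> QpX p X" by (rule vadd_QpX[OF x y])
  obtain m where m: "vval_ge X \<xi> m" "vval_ge X \<eta> m" "vval_ge X (vadd p X \<xi> \<eta>) m"
    using common_vval_ge[OF x y xy] by blast
  show ?thesis
  proof (rule eq_if_vagree_levels[OF limit_QpX[OF xy] vadd_QpX[OF limit_QpX[OF x] limit_QpX[OF y]]])
    fix N
    have 1: "vagree X (m + int N + 1) (H (vadd p X \<xi> \<eta>)) (S N (vadd p X \<xi> \<eta>))"
      by (rule limit_vagree_sum[OF xy m(3)])
    have 2: "S N (vadd p X \<xi> \<eta>) = vadd p X (S N \<xi>) (S N \<eta>)" by (rule Bops_add[OF sum_Bops x y])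
    have 3: "vagree X (m + int N + 1) (vadd p X (S N \<xi>) (S N \<eta>)) (vadd p X (H \<xi>) (H \<eta>))"
      by (rule vagree_add[OF sum_QpX[OF x] sum_QpX[OF y] limit_QpX[OF x] limit_QpX[OF y]])
         (rule vagree_sym, rule limit_vagree_sum; fact)+
    show "vagree X (m + int N + 1) (H (vadd p X \<xi> \<eta>)) (vadd p X (H \<xi>) (H \<eta>))"
      using vagree_trans[OF 1] 2 3 by simp
  qed
qed

lemma limit_vsmul:
  assumes c: "c \<in> padic_int p" and x: "\<xi> \<in> QpX p X"
  shows "H (vsmul p X c \<xi>) = vsmul p X c (H \<xi>)"
proof -
  have cx: "vsmul p X c \<xi> \<in> QpX p X" by (rule vsmul_QpX[OF c x])
  obtain m where m: "vval_ge X \<xi> m" "vval_ge X (vsmul p X c \<xi>) m" "vval_ge X \<xi> m"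
    using common_vval_ge[OF x cx x] by blast
  show ?thesis
  proof (rule eq_if_vagree_levels[OF limit_QpX[OF cx] vsmul_QpX[OF c limit_QpX[OF x]]])
    fix N
    have 1: "vagree X (m + int N + 1) (H (vsmul p X c \<xi>)) (S N (vsmul p X c \<xi>))"
      by (rule limit_vagree_sum[OF cx m(2)])
    have 2: "S N (vsmul p X c \<xi>) = vsmul p X c (S N \<xi>)" by (rule Bops_smul[OF sum_Bops c x])
    have 3: "vagree X (m + int N + 1) (vsmul p X c (S N \<xi>)) (vsmul p X c (H \<xi>))"
      by (rule vagree_smul[OF c sum_QpX[OF x] limit_QpX[OF x]])
        (rule vagree_sym, rule limit_vagree_sum[OF x m(1)])
    show "vagree X (m + int N + 1) (H (vsmul p X c \<xi>)) (vsmul p X c (H \<xi>))"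
      using vagree_trans[OF 1] 2 3 by simp
  qed
qed

lemma limit_vneg: "\<xi> \<in> QpX p X \<Longrightarrow> H (vneg p X \<xi>) = vneg p X (H \<xi>)"
  using limit_vsmul[OF padic_minus_one_int] vsmul_minus_one limit_QpX by metis

lemma limit_op_bound: "op_bound p X H 0"
  unfolding op_bound_def
proof (intro ballI allI impI)
  fix \<xi> n assume x: "\<xi> \<in> QpX p X" and l: "vval_ge X \<xi> n"
  have "vagree X (n + int 0 + 1) (H \<xi>) (S 0 \<xi>)" by (rule limit_vagree_sum[OF x l])
  then have "vagree X n (H \<xi>) \<xi>" using sum_0[OF x] vagree_mono[of n "n + 1"] by simp
  moreover have "vagree X n \<xi> (vzero X)" using l vval_ge_iff_vagree_zero by blast
  ultimately have "vagree X n (H \<xi>) (vzero X)" by (rule vagree_trans)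
  then have "vval_ge X (H \<xi>) n" unfolding vval_ge_iff_vagree_zero .
  then show "vval_ge X (H \<xi>) (n - 0)" by simp
qed

lemma limit_Bops: "H \<in> Bops p X"
  unfolding Bops_def
proof (intro CollectI conjI ballI)
  show "H \<in> extensional (QpX p X)" unfolding neumann_limit_def by simp
  show "H ` QpX p X \<subseteq> QpX p X" using limit_QpX by blast
  show "H (vadd p X \<xi> \<eta>) = vadd p X (H \<xi>) (H \<eta>)" if "\<xi> \<in> QpX p X" "\<eta> \<in> QpX p X" for \<xi> \<eta>
    using limit_vadd that by blast
  show "H (vsmul p X c \<xi>) = vsmul p X c (H \<xi>)" if "c \<in> padic_int p" "\<xi> \<in> QpX p X" for c \<xi>
    using limit_vsmul that by blast
  show "tau_continuous p X H"
  proof (rule tau_continuous_of_approx[OF limit_QpX limit_vadd limit_vneg limit_op_bound sum_Bops])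
    fix k
    show "\<exists>N. \<forall>\<xi>\<in>QpX p X. \<forall>n. vval_ge X \<xi> n \<longrightarrow> vagree X (n + k) (S N \<xi>) (H \<xi>)"
    proof (intro exI ballI allI impI)
      fix \<xi> n assume x: "\<xi> \<in> QpX p X" and l: "vval_ge X \<xi> n"
      have "vagree X (n + int (nat k) + 1) (H \<xi>) (S (nat k) \<xi>)" by (rule limit_vagree_sum[OF x l])
      then have "vagree X (n + k) (H \<xi>) (S (nat k) \<xi>)" by (rule vagree_mono[rotated]) simp
      then show "vagree X (n + k) (S (nat k) \<xi>) (H \<xi>)" by (rule vagree_sym)
    qed
  qed (assumption)+
qed

lemma sum_limit_op_norm: "0 \<le> op_norm p X (op_diff p X (S N) H) \<and>
  op_norm p X (op_diff p X (S N) H) \<le> real p powi (- (int N + 1))"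
proof -
  have q: "op_diff p X (S N) H \<xi> \<in> QpX p X" if "\<xi> \<in> QpX p X" for \<xi>
    using that sum_QpX limit_QpX by (simp add: op_diff_apply vadd_QpX vneg_QpX)
  have l: "vval_ge X (op_diff p X (S N) H \<xi>) (- (- (int N + 1)))" if x: "\<xi> \<in> QpX p X" and l0:
    "vval_ge X \<xi> 0" for \<xi>
  proof -
    have "vagree X (0 + int N + 1) (H \<xi>) (S N \<xi>)" by (rule limit_vagree_sum[OF x l0])
    then have "vagree X (int N + 1) (S N \<xi>) (H \<xi>)" using vagree_sym by simp
    then have "vval_ge X (op_diff p X (S N) H \<xi>) (int N + 1)"
      using vval_ge_diff_iff_vagree[OF sum_QpX[OF x] limit_QpX[OF x]] x by (simp add: op_diff_apply)
    then show ?thesis by (simp add: add.commute)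
  qed
  show ?thesis
    using op_norm_nonneg[where T = "op_diff p X (S N) H" and m = "- (int N + 1)", OF q l]
      op_norm_le_ppow[where T = "op_diff p X (S N) H" and m = "- (int N + 1)", OF q l] by blast
qed

lemma sum_limit_tendsto: "(\<lambda>N. op_norm p X (op_diff p X (S N) H)) \<longlonglongrightarrow> 0"
proof (rule tendsto_sandwich[where f = "\<lambda>_. 0" and h = "\<lambda>N. (1 / real p) ^ Suc N"])
  show "\<forall>\<^sub>F N in sequentially. 0 \<le> op_norm p X (op_diff p X (S N) H)" using sum_limit_op_norm
    by simp
  show "\<forall>\<^sub>F N in sequentially. op_norm p X (op_diff p X (S N) H) \<le> (1 / real p) ^ Suc N"
  proof (intro always_eventually allI)
    fix N
    have e0: "int N + 1 = int (Suc N)" by simp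
    have e1: "real p powi (- (int N + 1)) = inverse (real p powi (int (Suc N)))"
      unfolding e0 by (rule power_int_minus)
    have e2: "real p powi (int (Suc N)) = real p ^ Suc N" by (rule power_int_of_nat)
    have eq: "real p powi (- (int N + 1)) = (1 / real p) ^ Suc N"
      unfolding e1 e2 by (simp add: power_one_over inverse_eq_divide)
    have "op_norm p X (op_diff p X (S N) H) \<le> real p powi (- (int N + 1))" using sum_limit_op_norm
      by blast
    then show "op_norm p X (op_diff p X (S N) H) \<le> (1 / real p) ^ Suc N" by (simp only: eq)
  qed
  show "(\<lambda>_. 0) \<longlonglongrightarrow> (0::real)" by simp
  have "(\<lambda>N. (1 / real p) ^ N) \<longlonglongrightarrow> 0" using p_gt_1 by (intro LIMSEQ_power_zero) auto
  then show "(\<lambda>N. (1 / real p) ^ Suc N) \<longlonglongrightarrow> 0" by (rule LIMSEQ_Suc)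
qed

lemma sum_commute_w: "\<xi> \<in> QpX p X \<Longrightarrow> S N (w \<xi>) = w (S N \<xi>)"
proof (induction N)
  case 0 then show ?case using sum_0 w_QpX by simp
next
  case (Suc N)
  have "S (Suc N) (w \<xi>) = vadd p X (w \<xi>) (w (w (S N \<xi>)))" using sum_Suc[OF w_QpX[OF Suc.prems]] Suc
    by simp
  also have "\<dots> = w (vadd p X \<xi> (w (S N \<xi>)))"
    using Bops_add[OF w Suc.prems w_QpX[OF sum_QpX[OF Suc.prems]]] by simp
  also have "\<dots> = w (S (Suc N) \<xi>)" using sum_Suc[OF Suc.prems] by simp
  finally show ?case .
qed

lemma limit_commute_w:
  assumes x: "\<xi> \<in> QpX p X"
  shows "H (w \<xi>) = w (H \<xi>)"
proof -
  obtain m where m: "vval_ge X \<xi> m" "vval_ge X (w \<xi>) m" "vval_ge X \<xi> m"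
    using common_vval_ge[OF x w_QpX[OF x] x] by blast
  show ?thesis
  proof (rule eq_if_vagree_levels[OF limit_QpX[OF w_QpX[OF x]] w_QpX[OF limit_QpX[OF x]]])
    fix N
    have 1: "vagree X (m + int N + 1) (H (w \<xi>)) (S N (w \<xi>))"
      by (rule limit_vagree_sum[OF w_QpX[OF x] m(2)])
    have 2: "vagree X (m + int N + 1 - -1) (w (S N \<xi>)) (w (H \<xi>))"
      by (rule op_bound_vagree[OF w w_bound sum_QpX[OF x] limit_QpX[OF x]])
        (rule vagree_sym, rule limit_vagree_sum[OF x m(1)])
    then have "vagree X (m + int N + 1) (w (S N \<xi>)) (w (H \<xi>))" by (rule vagree_mono[rotated]) simp
    then show "vagree X (m + int N + 1) (H (w \<xi>)) (w (H \<xi>))"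
      using vagree_trans[OF 1] sum_commute_w[OF x] by simp
  qed
qed

lemma one_minus_w_limit:
  assumes x: "\<xi> \<in> QpX p X"
  shows "vadd p X (H \<xi>) (vneg p X (w (H \<xi>))) = \<xi>"
proof -
  obtain m where m: "vval_ge X \<xi> m" "vval_ge X \<xi> m" "vval_ge X \<xi> m" using common_vval_ge[OF x x x]
    by blast
  show ?thesis
  proof (rule eq_if_vagree_levels[OF
    vadd_QpX[OF limit_QpX[OF x] vneg_QpX[OF w_QpX[OF limit_QpX[OF x]]]] x])
    fix N
    have a1: "vagree X (m + int (Suc N) + 1) (H \<xi>) (S (Suc N) \<xi>)"
      by (rule limit_vagree_sum[OF x m(1)])
    have a2: "vagree X (m + int N + 1 - -1) (w (H \<xi>)) (w (S N \<xi>))"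
      by (rule op_bound_vagree[OF w w_bound limit_QpX[OF x] sum_QpX[OF x]])
        (rule limit_vagree_sum[OF x m(1)])
    have "vagree X (m + int N + 1) (vadd p X (H \<xi>) (vneg p X (w (H \<xi>))))
                                   (vadd p X (S (Suc N) \<xi>) (vneg p X (w (S N \<xi>))))"
    proof (rule vagree_add[OF limit_QpX[OF x] vneg_QpX[OF w_QpX[OF limit_QpX[OF x]]] sum_QpX[OF x]
      vneg_QpX[OF w_QpX[OF sum_QpX[OF x]]]])
      show "vagree X (m + int N + 1) (H \<xi>) (S (Suc N) \<xi>)" using a1
        by (rule vagree_mono[rotated]) simp
      show "vagree X (m + int N + 1) (vneg p X (w (H \<xi>))) (vneg p X (w (S N \<xi>)))"
        by (rule vagree_neg[OF w_QpX[OF limit_QpX[OF x]] w_QpX[OF sum_QpX[OF x]]])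
          (use a2 in \<open>rule vagree_mono[rotated]\<close>, simp)
    qed
    moreover have "vadd p X (S (Suc N) \<xi>) (vneg p X (w (S N \<xi>))) = \<xi>"
      using sum_Suc[OF x, of N]
        vadd_assoc[OF x w_QpX[OF sum_QpX[OF x]] vneg_QpX[OF w_QpX[OF sum_QpX[OF x]]]]
        vadd_neg[OF w_QpX[OF sum_QpX[OF x]]] vadd_zero[OF x] by simp
    ultimately show "vagree X (m + int N + 1) (vadd p X (H \<xi>) (vneg p X (w (H \<xi>)))) \<xi>" by simp
  qed
qed

lemma limit_one_minus_w:
  assumes x: "\<xi> \<in> QpX p X"
  shows "H (vadd p X \<xi> (vneg p X (w \<xi>))) = \<xi>"
  using limit_vadd[OF x vneg_QpX[OF w_QpX[OF x]]] limit_vneg[OF w_QpX[OF x]] limit_commute_w[OF x]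
    one_minus_w_limit[OF x] by simp

end

section \<open>Idempotents in a closed subalgebra\<close>

context padic_space
begin

lemma
  assumes "closed_unital_subalgebra p X A"
  shows closed_unital_subalgebra_Bops: "T \<in> A \<Longrightarrow> T \<in> Bops p X"
    and closed_unital_subalgebra_id: "op_id p X \<in> A"
    and closed_unital_subalgebra_add: "S \<in> A \<Longrightarrow> T \<in> A \<Longrightarrow> op_add p X S T \<in> A"
    and closed_unital_subalgebra_comp: "S \<in> A \<Longrightarrow> T \<in> A \<Longrightarrow> op_comp p X S T \<in> A"
    and closed_unital_subalgebra_smul: "c \<in> padic_int p \<Longrightarrow> T \<in> A \<Longrightarrow> op_smul p X c T \<in> A"
    and closed_unital_subalgebra_limit: "(\<And>n. Ts n \<in> A) \<Longrightarrow> T \<in> Bops p X \<Longrightarrow>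
      (\<lambda>n. op_norm p X (op_diff p X (Ts n) T)) \<longlonglongrightarrow> 0 \<Longrightarrow> T \<in> A"
  using assms unfolding closed_unital_subalgebra_def by blast+

lemma closed_unital_subalgebra_diff:
  assumes A: "closed_unital_subalgebra p X A" and S: "S \<in> A" and T: "T \<in> A"
  shows "op_diff p X S T \<in> A"
proof -
  have "op_neg p X T = op_smul p X (padic_minus_one p) T"
    using op_smul_minus_one closed_unital_subalgebra_Bops[OF A T] by simp
  also have "\<dots> \<in> A" by (rule closed_unital_subalgebra_smul[OF A padic_minus_one_int T])
  finally show ?thesis unfolding op_diff_def by (rule closed_unital_subalgebra_add[OF A S])
qed

lemma closed_unital_subalgebra_neumann_inverse:
  assumes A: "closed_unital_subalgebra p X A" and wA: "w \<in> A" and bw: "op_bound p X w (-1)"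
  obtains h where "h \<in> A"
    and "op_comp p X h (op_diff p X (op_id p X) w) = op_id p X"
    and "op_comp p X (op_diff p X (op_id p X) w) h = op_id p X"
proof -
  have sums: "neumann_sum p X w N \<in> A" for N
    by (induction N) (simp_all add: A wA closed_unital_subalgebra_id closed_unital_subalgebra_add
        closed_unital_subalgebra_comp)
  interpret neumann_series p X w
    by unfold_locales (use closed_unital_subalgebra_Bops[OF A] sums wA bw in auto)
  have "H \<in> A" by (rule closed_unital_subalgebra_limit[OF A sums limit_Bops sum_limit_tendsto])
  moreover have "op_comp p X H (op_diff p X (op_id p X) w) = op_id p X"
    unfolding op_comp_def op_id_def by (rule restrict_ext) (simp add: limit_one_minus_w)
  moreover have "op_comp p X (op_diff p X (op_id p X) w) H = op_id p X"
    unfolding op_comp_def op_id_def by (rule restrict_ext) (simp add: one_minus_w_limit limit_QpX)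
  ultimately show thesis using that by blast
qed

lemma idempotents_intertwined:
  assumes e: "e \<in> Bops p X" and f: "f \<in> Bops p X"
    and ee: "op_comp p X e e = e" and ff: "op_comp p X f f = f"
  defines "d \<equiv> op_diff p X e f"
  defines "u \<equiv> op_diff p X (op_id p X) (op_diff p X (op_comp p X e d) (op_comp p X d f))"
  shows "op_comp p X e u = op_comp p X u f"
proof -
  have ee': "e (e \<eta>) = e \<eta>" and ff': "f (f \<eta>) = f \<eta>" if "\<eta> \<in> QpX p X" for \<eta>
    using ee ff that op_comp_apply by metis+
  have u_apply: "u \<eta> = vsub p X \<eta> (vsub p X (vsub p X (e \<eta>) (e (f \<eta>))) (vsub p X (e (f \<eta>)) (f \<eta>)))"
    if "\<eta> \<in> QpX p X" for \<eta>
    using that e f by (simp add: u_def d_def Bops_vsub ee' ff')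
  show ?thesis
    unfolding op_comp_def
  proof (rule restrict_ext)
    fix \<xi> assume x: "\<xi> \<in> QpX p X"
    have "e (u \<xi>) = vsub p X (e \<xi>) (vsub p X (e \<xi>) (e (f \<xi>)))"
      using x e f by (simp add: u_apply Bops_vsub ee' vadd_neg vneg_zero vadd_zero)
    also have "\<dots> = e (f \<xi>)" using x e f by (simp add: vsub_vsub_cancel)
    also have "\<dots> = vadd p X (f \<xi>) (vsub p X (e (f \<xi>)) (f \<xi>))"
      using x e f by (simp add: vadd_vsub_cancel)
    also have "\<dots> = u (f \<xi>)"
      using x e f by (simp add: u_apply ee' ff' vadd_neg vzero_add vneg_vneg)
    finally show "e (u \<xi>) = u (f \<xi>)" .
  qed
qed

end

theorem lemma3p6:
  fixes p :: nat and X :: "'x set" and A :: "'x oper set" and e f :: "'x oper"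
  assumes "prime p"
    and "countable X"
    and "closed_unital_subalgebra p X A"
    and "e \<in> A" and "f \<in> A"
    and "op_comp p X e e = e" and "op_comp p X f f = f"
    and "e \<noteq> op_zero p X"
    and "op_norm p X (op_diff p X e f) < 1 / op_norm p X e"
  shows "\<exists>g\<in>A. \<exists>h\<in>A. op_comp p X h g = op_id p X \<and> op_comp p X g h = op_id p X \<and>
           op_comp p X (op_comp p X h e) g = f"
proof -
  interpret padic_space p X by unfold_locales (rule prime_gt_1_nat[OF assms(1)])
  note A = assms(3) and Bops = closed_unital_subalgebra_Bops[OF assms(3)]
  define d where "d = op_diff p X e f"
  define w where "w = op_diff p X (op_comp p X e d) (op_comp p X d f)"
  define u where "u = op_diff p X (op_id p X) w"
  have dA: "d \<in> A" unfolding d_def by (rule closed_unital_subalgebra_diff[OF A assms(4,5)])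
  have edA: "op_comp p X e d \<in> A" and dfA: "op_comp p X d f \<in> A"
    using closed_unital_subalgebra_comp[OF A] dA assms(4,5) by blast+
  have wA: "w \<in> A" unfolding w_def by (rule closed_unital_subalgebra_diff[OF A edA dfA])
  have uA: "u \<in> A" unfolding u_def
    by (rule closed_unital_subalgebra_diff[OF A closed_unital_subalgebra_id[OF A] wA])
  have "op_bound p X w (-1)"
    using idempotent_perturbation_op_bound[OF Bops[OF assms(4)] Bops[OF assms(5)] assms(6,8)]
      Bops[OF dA] assms(9)
    unfolding w_def d_def by blast
  then obtain h where h: "h \<in> A" "op_comp p X h u = op_id p X" "op_comp p X u h = op_id p X"
    using closed_unital_subalgebra_neumann_inverse[OF A wA] unfolding u_def by blast
  have "op_comp p X (op_comp p X h e) u = op_comp p X h (op_comp p X e u)"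
    by (rule op_comp_assoc[OF Bops[OF uA]])
  also have "\<dots> = op_comp p X h (op_comp p X u f)"
    using idempotents_intertwined[OF Bops[OF assms(4)] Bops[OF assms(5)] assms(6,7)]
    unfolding u_def w_def d_def by simp
  also have "\<dots> = f"
    using op_comp_assoc[OF Bops[OF assms(5)], of h u, symmetric] h(2)
      op_comp_id_left[OF Bops[OF assms(5)]]
    by simp
  finally show ?thesis using h uA by blast
qed

end
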